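(* Let $R$ be a commutative ring, $A=R[\mathbb{Z}]=R[t,t^{-1}]$, and let $a\in HH_1(A;A)$ correspond to $ut^k\in A$ with $u\in R^\times$ and $k\in\mathbb{Z}$. Then $\rho_a:HH^*(A;A)\to HH_{1-*}(A;A)$, $b\mapsto\rho(a\otimes b)$, is an isomorphism, and with $\Delta_a=\rho_a^{-1}B\rho_a$ one has, as BV-algebras, $$HH^*(A;A)\cong R[x,x^{-1}]\otimes\Lambda(y),\qquad\Delta_a(x^i)=0,\qquad\Delta_a(yx^i)=(i+k)x^{i-1},$$ where $x^{\pm1}\in HH^0(A;A)$ are the classes of $t^{\pm1}$ and $y\in HH^1(A;A)$ is the class of $1\in A$ (represented by the derivation $t^j\mapsto -jt^{j-1}$).
   Context: $HH_*$ and $HH^*$ are computed from the $A^e$-resolution $0\to A\otimes A\xrightarrow{d_1}A\otimes A\xrightarrow{\mu}A\to0$, $d_1(a\otimes b)=(a\otimes b)(1\otimes t-t\otimes1)$, giving $HH_i(A;A)=HH^i(A;A)=A$ for $i=0,1$ and $0$ otherwise; under this, $c\in A=HH_1(A;A)$ corresponds to the class of the normalized Hochschild $1$-chain $-t\otimes c\in\bar A\otimes A$. $B$ is the Connes operator $B(a_1\otimes\cdots\otimes a_n\otimes a)=\sum_{i=0}^n(-1)^{in}a_i\otimes\cdots\otimes a_n\otimes a\otimes a_1\otimes\cdots\otimes a_{i-1}\otimes1$ ($a_0:=a$), and $\rho$ is the action $(a_1\otimes\cdots\otimes a_p\otimes a)\cdot f=(-1)^{pq}a_{q+1}\otimes\cdots\otimes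 a_p\otimes af(a_1,\dots,a_q)$ of $HH^q$ on $HH_p$. A BV-algebra is a graded commutative algebra with degree $-1$ operator $\Delta$, $\Delta^2=0$, whose derivation defect is a Gerstenhaber bracket. *)

theory Defs
  imports Main
begin

text \<open>
  Concrete model of the normalized Hochschild complexes of the Laurent polynomial
  ring A = R[t,t^-1] over a commutative ring R (type 'r), using the R-basis
  t^j (j :: int) of A and the basis t^j, j ~= 0, of Abar = A/R.

  * A Laurent polynomial is a finitely supported function int => 'r (coefficient of t^i).
  * A normalized Hochschild n-chain in Abar^(n) (x) A is a finitely supported function
    int list => 'r, supported on words [j1,...,jn,j0] (encoding t^j1 (x) ... (x) t^jn (x) t^j0)
    with j1,...,jn nonzero.
  * A normalized Hochschild q-cochain (an R-linear map Abar^(q) => A) is a function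
    int list => int => 'r whose value on a word [j1..jq] of nonzero integers is the Laurent
    polynomial f(t^j1,...,t^jq), and which is 0 on all other words.
\<close>

definition lps :: "(int \<Rightarrow> 'r::comm_ring_1) set" where
  "lps = {p. finite {i. p i \<noteq> 0}}"

definition tpow :: "int \<Rightarrow> int \<Rightarrow> 'r::comm_ring_1" where
  "tpow j = (\<lambda>i. if i = j then 1 else 0)"

definition lmul :: "(int \<Rightarrow> 'r::comm_ring_1) \<Rightarrow> (int \<Rightarrow> 'r) \<Rightarrow> int \<Rightarrow> 'r" where
  "lmul p q = (\<lambda>i. \<Sum>j\<in>{j. p j \<noteq> 0}. p j * q (i - j))"

definition lsmult :: "'r::comm_ring_1 \<Rightarrow> (int \<Rightarrow> 'r) \<Rightarrow> int \<Rightarrow> 'r" where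
  "lsmult r p = (\<lambda>i. r * p i)"

definition lshift :: "int \<Rightarrow> (int \<Rightarrow> 'r::comm_ring_1) \<Rightarrow> int \<Rightarrow> 'r" where
  "lshift a p = (\<lambda>i. p (i - a))"   \<comment> \<open>multiplication by t^a\<close>

definition chainsN :: "nat \<Rightarrow> (int list \<Rightarrow> 'r::comm_ring_1) set" where
  "chainsN n = {c. finite {w. c w \<noteq> 0} \<and>
      (\<forall>w. c w \<noteq> 0 \<longrightarrow> length w = Suc n \<and> (\<forall>i<n. w ! i \<noteq> 0))}"

definition chains :: "int \<Rightarrow> (int list \<Rightarrow> 'r::comm_ring_1) set" where
  "chains n = (if n < 0 then {\<lambda>_. 0} else chainsN (nat n))"

text \<open>Normalized basis element of a word [j1..jn,j0]; zero if some jm (m \<le> n) is 0,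
  since then the corresponding tensor factor is 1 = 0 in Abar.\<close>
definition bas :: "int list \<Rightarrow> int list \<Rightarrow> 'r::comm_ring_1" where
  "bas w = (if (\<forall>i < length w - 1. w ! i \<noteq> 0) then (\<lambda>v. if v = w then 1 else 0) else (\<lambda>v. 0))"

definition linext :: "(int list \<Rightarrow> int list \<Rightarrow> 'r::comm_ring_1) \<Rightarrow> (int list \<Rightarrow> 'r) \<Rightarrow> int list \<Rightarrow> 'r" where
  "linext g c = (\<lambda>v. \<Sum>w\<in>{w. c w \<noteq> 0}. c w * g w v)"

text \<open>Face maps on a word w = [a1,...,an,a0] (positions 0..n):
  d_0(a1 (x) ... (x) an (x) a) = a2 (x) ... (x) an (x) a a1,
  d_i = multiply a_i a_(i+1)  (1 \<le> i \<le> n-1),  d_n = a1 (x) ... (x) a_(n-1) (x) a_n a.\<close>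
definition face :: "nat \<Rightarrow> int list \<Rightarrow> int list" where
  "face i w = (if i = 0 then butlast (tl w) @ [last w + hd w]
               else take (i - 1) w @ [w ! (i - 1) + w ! i] @ drop (i + 1) w)"

definition bd_word :: "int list \<Rightarrow> int list \<Rightarrow> 'r::comm_ring_1" where
  "bd_word w = (let n = length w - 1 in
     if n = 0 then (\<lambda>v. 0) else (\<lambda>v. \<Sum>i = 0..n. (-1) ^ i * bas (face i w) v))"

definition bd :: "int \<Rightarrow> (int list \<Rightarrow> 'r::comm_ring_1) \<Rightarrow> int list \<Rightarrow> 'r" where
  "bd n c = (if n \<le> 0 then (\<lambda>v. 0) else linext bd_word c)"

text \<open>Connes operator
  B(a1 (x) ... (x) an (x) a) = sum_(i=0..n) (-1)^(i n) a_i (x) ... (x) a_n (x) a_0 (x) a_1 (x) ... (x) a_(i-1) (x) 1,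
  with a_0 = a (for i = 0 the term is a_0 (x) a_1 (x) ... (x) a_n (x) 1).\<close>
definition connesB_word :: "int list \<Rightarrow> int list \<Rightarrow> 'r::comm_ring_1" where
  "connesB_word w = (let n = length w - 1 in
     (\<lambda>v. \<Sum>i = 0..n. (-1) ^ (i * n) *
        bas ((if i = 0 then rotate n w else rotate (i - 1) w) @ [0]) v))"

definition connesB :: "int \<Rightarrow> (int list \<Rightarrow> 'r::comm_ring_1) \<Rightarrow> int list \<Rightarrow> 'r" where
  "connesB n c = (if n < 0 then (\<lambda>v. 0) else linext connesB_word c)"

definition cycles :: "int \<Rightarrow> (int list \<Rightarrow> 'r::comm_ring_1) set" where
  "cycles n = {c \<in> chains n. bd n c = (\<lambda>v. 0)}"

definition boundaries :: "int \<Rightarrow> (int list \<Rightarrow> 'r::comm_ring_1) set" where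
  "boundaries n = bd (n + 1) ` chains (n + 1)"

definition hclass :: "int \<Rightarrow> (int list \<Rightarrow> 'r::comm_ring_1) \<Rightarrow> (int list \<Rightarrow> 'r) set" where
  "hclass n c = {c' \<in> chains n. (\<lambda>v. c' v - c v) \<in> boundaries n}"

definition HHho :: "int \<Rightarrow> (int list \<Rightarrow> 'r::comm_ring_1) set set" where
  "HHho n = hclass n ` cycles n"

definition cochains :: "nat \<Rightarrow> (int list \<Rightarrow> int \<Rightarrow> 'r::comm_ring_1) set" where
  "cochains q = {f. (\<forall>as. f as \<in> lps) \<and>
      (\<forall>as. f as \<noteq> (\<lambda>i. 0) \<longrightarrow> length as = q \<and> (\<forall>a\<in>set as. a \<noteq> 0))}"

definition cobd :: "nat \<Rightarrow> (int list \<Rightarrow> int \<Rightarrow> 'r::comm_ring_1) \<Rightarrow> int list \<Rightarrow> int \<Rightarrow> 'r" where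
  "cobd q f = (\<lambda>as. if length as = Suc q \<and> (\<forall>a\<in>set as. a \<noteq> 0) then
      (\<lambda>i. lshift (hd as) (f (tl as)) i
         + (\<Sum>j = 1..q. (-1) ^ j * f (take (j - 1) as @ [as ! (j - 1) + as ! j] @ drop (j + 1) as) i)
         + (-1) ^ Suc q * lshift (last as) (f (butlast as)) i)
    else (\<lambda>i. 0))"

definition cocycles :: "nat \<Rightarrow> (int list \<Rightarrow> int \<Rightarrow> 'r::comm_ring_1) set" where
  "cocycles q = {f \<in> cochains q. cobd q f = (\<lambda>as i. 0)}"

definition coboundaries :: "nat \<Rightarrow> (int list \<Rightarrow> int \<Rightarrow> 'r::comm_ring_1) set" where
  "coboundaries q = (if q = 0 then {\<lambda>as i. 0} else cobd (q - 1) ` cochains (q - 1))"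

definition coclass :: "nat \<Rightarrow> (int list \<Rightarrow> int \<Rightarrow> 'r::comm_ring_1) \<Rightarrow> (int list \<Rightarrow> int \<Rightarrow> 'r) set" where
  "coclass q f = {f' \<in> cochains q. (\<lambda>as i. f' as i - f as i) \<in> coboundaries q}"

definition HHco :: "nat \<Rightarrow> (int list \<Rightarrow> int \<Rightarrow> 'r::comm_ring_1) set set" where
  "HHco q = coclass q ` cocycles q"

definition cup :: "nat \<Rightarrow> nat \<Rightarrow> (int list \<Rightarrow> int \<Rightarrow> 'r::comm_ring_1) \<Rightarrow> (int list \<Rightarrow> int \<Rightarrow> 'r)
     \<Rightarrow> int list \<Rightarrow> int \<Rightarrow> 'r" where
  "cup p q f g = (\<lambda>as. if length as = p + q then lmul (f (take p as)) (g (drop p as)) else (\<lambda>i. 0))"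

text \<open>(a1 (x) ... (x) ap (x) a) . f = (-1)^(pq) a_(q+1) (x) ... (x) a_p (x) a f(a1,...,aq).\<close>
definition cap_word :: "nat \<Rightarrow> (int list \<Rightarrow> int \<Rightarrow> 'r::comm_ring_1) \<Rightarrow> int list \<Rightarrow> int list \<Rightarrow> 'r" where
  "cap_word q f w = (let p = length w - 1 in
     if q \<le> p then (\<lambda>v. (-1) ^ (p * q) *
        (\<Sum>i\<in>{i. f (take q w) i \<noteq> 0}. f (take q w) i * bas (drop q (butlast w) @ [last w + i]) v))
     else (\<lambda>v. 0))"

definition cap :: "(int list \<Rightarrow> 'r::comm_ring_1) \<Rightarrow> nat \<Rightarrow> (int list \<Rightarrow> int \<Rightarrow> 'r) \<Rightarrow> int list \<Rightarrow> 'r" where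
  "cap c q f = linext (\<lambda>w. cap_word q f w) c"

definition induced :: "('b \<Rightarrow> 'c set) \<Rightarrow> ('a \<Rightarrow> 'b) \<Rightarrow> 'a set \<Rightarrow> 'c set" where
  "induced cls F X = cls (F (SOME x. x \<in> X))"

text \<open>The class a \<in> HH_1(A;A) corresponding to u t^k \<in> A is represented by the normalized
  1-chain - t (x) u t^k, i.e. the word [1,k] with coefficient -u.\<close>
definition a_rep :: "'r::comm_ring_1 \<Rightarrow> int \<Rightarrow> int list \<Rightarrow> 'r" where
  "a_rep u k = (\<lambda>v. if v = [1, k] then - u else 0)"

definition rhoHH :: "'r::comm_ring_1 \<Rightarrow> int \<Rightarrow> nat \<Rightarrow> (int list \<Rightarrow> int \<Rightarrow> 'r) set \<Rightarrow> (int list \<Rightarrow> 'r) set" where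
  "rhoHH u k q = induced (hclass (1 - int q)) (cap (a_rep u k) q)"

definition BHH :: "int \<Rightarrow> (int list \<Rightarrow> 'r::comm_ring_1) set \<Rightarrow> (int list \<Rightarrow> 'r) set" where
  "BHH n = induced (hclass (n + 1)) (connesB n)"

definition DeltaHH :: "'r::comm_ring_1 \<Rightarrow> int \<Rightarrow> nat \<Rightarrow> (int list \<Rightarrow> int \<Rightarrow> 'r) set \<Rightarrow> (int list \<Rightarrow> int \<Rightarrow> 'r) set" where
  "DeltaHH u k q X = the_inv_into (HHco (q - 1)) (rhoHH u k (q - 1)) (BHH (1 - int q) (rhoHH u k q X))"

definition cupHH :: "nat \<Rightarrow> nat \<Rightarrow> (int list \<Rightarrow> int \<Rightarrow> 'r::comm_ring_1) set \<Rightarrow> (int list \<Rightarrow> int \<Rightarrow> 'r) set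
    \<Rightarrow> (int list \<Rightarrow> int \<Rightarrow> 'r) set" where
  "cupHH p q X Y = coclass (p + q) (cup p q (SOME f. f \<in> X) (SOME g. g \<in> Y))"

definition addHH :: "nat \<Rightarrow> (int list \<Rightarrow> int \<Rightarrow> 'r::comm_ring_1) set \<Rightarrow> (int list \<Rightarrow> int \<Rightarrow> 'r) set
    \<Rightarrow> (int list \<Rightarrow> int \<Rightarrow> 'r) set" where
  "addHH q X Y = coclass q (\<lambda>as i. (SOME f. f \<in> X) as i + (SOME g. g \<in> Y) as i)"

definition smultHH :: "nat \<Rightarrow> 'r::comm_ring_1 \<Rightarrow> (int list \<Rightarrow> int \<Rightarrow> 'r) set \<Rightarrow> (int list \<Rightarrow> int \<Rightarrow> 'r) set" where
  "smultHH q r X = coclass q (\<lambda>as i. r * (SOME f. f \<in> X) as i)"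

definition cochain0 :: "(int \<Rightarrow> 'r::comm_ring_1) \<Rightarrow> int list \<Rightarrow> int \<Rightarrow> 'r" where
  "cochain0 p = (\<lambda>as. if as = [] then p else (\<lambda>i. 0))"

definition yder :: "int list \<Rightarrow> int \<Rightarrow> 'r::comm_ring_1" where
  "yder = (\<lambda>as. if length as = 1 \<and> hd as \<noteq> 0
               then (\<lambda>i. if i = hd as - 1 then - of_int (hd as) else 0) else (\<lambda>i. 0))"

end

theory Submission
  imports Defs
begin

text \<open>
  Cohomology: every normalized q-cocycle with q \<ge> 2 is an explicit coboundary, obtained by
  telescoping the cocycle identity in the last argument; a 1-cocycle is determined by its value
  on t through the cocycle identity, so HH^1 = A y, and HH^0 = A.

  Homology: HH_0 = A, and modulo boundaries the 1-chain t^x \<otimes> t^a equals x (t \<otimes> t^(x+a-1)),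
  while the coefficient of t^m dt in the Hochschild-Kostant-Rosenberg image a da_1 kills
  boundaries; hence HH_1 = A (t \<otimes> -). Capping with a = -t \<otimes> u t^k is multiplication by the
  unit -u followed by a shift by k in these coordinates, so rho_a is bijective.

  Connes' B maps t^a \<otimes> t^c to [t^c, t^a, 1] - [t^a, t^c, 1], a boundary, and maps
  t^(k+i) to t^(k+i) \<otimes> 1, which is homologous to (k+i) t \<otimes> t^(k+i-1) = rho_a((k+i) t^(i-1));
  this gives Delta_a. Finally y \<union> y is the coboundary of t^a \<mapsto> -binom(a,2) t^(a-2).
\<close>

definition normal_word :: "int list \<Rightarrow> bool" where
  "normal_word w = (\<forall>i < length w - 1. w ! i \<noteq> 0)"

lemma bas_apply: "bas w v = (if normal_word w \<and> v = w then 1 else 0)"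
  by (simp add: bas_def normal_word_def)

lemma normal_word_1: "normal_word [a]"
  by (simp add: normal_word_def)

lemma normal_word_2: "normal_word [x, a] \<longleftrightarrow> x \<noteq> 0"
  by (auto simp: normal_word_def)

lemma normal_word_3: "normal_word [x, y, a] \<longleftrightarrow> x \<noteq> 0 \<and> y \<noteq> 0"
  by (auto simp: normal_word_def less_Suc_eq numeral_2_eq_2)

lemma normal_word_4: "normal_word [x, y, z, a] \<longleftrightarrow> x \<noteq> 0 \<and> y \<noteq> 0 \<and> z \<noteq> 0"
  by (auto simp: normal_word_def less_Suc_eq numeral_3_eq_3)

lemma linext_eq_sum_superset:
  assumes "finite S" "{w. c w \<noteq> 0} \<subseteq> S"
  shows "linext g c v = (\<Sum>w\<in>S. c w * g w v)"
  unfolding linext_def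
  by (rule sum.mono_neutral_left) (use assms in auto)

lemma linext_bas: "linext g (bas w) = (if normal_word w then g w else (\<lambda>x. 0))"
proof
  fix x
  have "linext g (bas w) x = (\<Sum>v\<in>{w}. bas w v * g v x)"
    by (rule linext_eq_sum_superset) (auto simp: bas_apply split: if_splits)
  then show "linext g (bas w) x = (if normal_word w then g w else (\<lambda>x. 0)) x"
    by (simp add: bas_apply)
qed

lemma linext_sum_bas:
  fixes c :: "'a \<Rightarrow> 'r::comm_ring_1"
  assumes J: "finite J"
  shows "linext g (\<lambda>v. \<Sum>j\<in>J. c j * bas (W j) v) x =
         (\<Sum>j\<in>J. c j * (if normal_word (W j) then g (W j) x else 0))"
proof -
  let ?c = "\<lambda>v. \<Sum>j\<in>J. c j * bas (W j) v"
  have sub: "{w. ?c w \<noteq> 0} \<subseteq> W ` J"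
  proof
    fix w assume "w \<in> {w. ?c w \<noteq> 0}"
    then obtain j where "j \<in> J" "c j * bas (W j) w \<noteq> 0"
      by (metis (mono_tags, lifting) mem_Collect_eq sum.neutral)
    then show "w \<in> W ` J" by (auto simp: bas_apply split: if_splits)
  qed
  have "linext g ?c x = (\<Sum>w\<in>W ` J. ?c w * g w x)"
    by (rule linext_eq_sum_superset) (use J sub in auto)
  also have "\<dots> = (\<Sum>w\<in>W ` J. \<Sum>j\<in>{j\<in>J. W j = w}. c j * (if normal_word (W j) then g (W j) x else 0))"
  proof (rule sum.cong[OF refl])
    fix w
    have "?c w * g w x = (\<Sum>j\<in>J. c j * bas (W j) w * g w x)"
      by (simp add: sum_distrib_right)
    also have "\<dots> = (\<Sum>j\<in>{j\<in>J. W j = w}. c j * bas (W j) w * g w x)"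
      by (rule sum.mono_neutral_right) (use J in \<open>auto simp: bas_apply\<close>)
    also have "\<dots> = (\<Sum>j\<in>{j\<in>J. W j = w}. c j * (if normal_word (W j) then g (W j) x else 0))"
      by (rule sum.cong) (auto simp: bas_apply)
    finally show "?c w * g w x = \<dots>" .
  qed
  also have "\<dots> = (\<Sum>j\<in>J. c j * (if normal_word (W j) then g (W j) x else 0))"
    by (rule sum.image_gen[symmetric]) (rule J)
  finally show ?thesis .
qed

lemma linext_zero: "linext g (\<lambda>v. 0) = (\<lambda>x. 0)"
  by (simp add: linext_def)

lemma linext_add:
  assumes "finite {w. c1 w \<noteq> 0}" "finite {w. c2 w \<noteq> 0}"
  shows "linext g (\<lambda>v. c1 v + c2 v) x = linext g c1 x + linext g c2 x"
proof -
  let ?S = "{w. c1 w \<noteq> 0} \<union> {w. c2 w \<noteq> 0}"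
  have f: "finite ?S" using assms by simp
  have "linext g (\<lambda>v. c1 v + c2 v) x = (\<Sum>w\<in>?S. (c1 w + c2 w) * g w x)"
    by (rule linext_eq_sum_superset) (use f in auto)
  also have "\<dots> = (\<Sum>w\<in>?S. c1 w * g w x) + (\<Sum>w\<in>?S. c2 w * g w x)"
    by (simp add: sum.distrib algebra_simps)
  also have "\<dots> = linext g c1 x + linext g c2 x"
    by (subst (1 2) linext_eq_sum_superset[of ?S]) (use f in auto)
  finally show ?thesis .
qed

lemma linext_scale:
  assumes "finite {w. c w \<noteq> 0}"
  shows "linext g (\<lambda>v. r * c v) x = r * linext g c x"
proof -
  have "linext g (\<lambda>v. r * c v) x = (\<Sum>w\<in>{w. c w \<noteq> 0}. (r * c w) * g w x)"
    by (rule linext_eq_sum_superset) (use assms in auto)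
  also have "\<dots> = r * linext g c x"
    by (simp add: linext_def sum_distrib_left mult.assoc)
  finally show ?thesis .
qed

lemma linext_diff:
  assumes "finite {w. c1 w \<noteq> 0}" "finite {w. c2 w \<noteq> 0}"
  shows "linext g (\<lambda>v. c1 v - c2 v) x = linext g c1 x - linext g c2 x"
  using linext_add[OF assms(1), of "\<lambda>v. (-1) * c2 v" g x] linext_scale[OF assms(2), of g "-1" x]
    assms(2) by simp

lemma linext_linext:
  assumes e: "finite {w. e w \<noteq> 0}" and h: "\<And>w. e w \<noteq> 0 \<Longrightarrow> finite {v. h w v \<noteq> 0}"
  shows "linext g (linext h e) x = linext (\<lambda>w. linext g (h w)) e x"
proof -
  let ?S = "{w. e w \<noteq> 0}"
  let ?T = "\<Union>w\<in>?S. {v. h w v \<noteq> 0}"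
  have fT: "finite ?T" using e h by auto
  have sub: "{v. linext h e v \<noteq> 0} \<subseteq> ?T"
  proof
    fix v assume "v \<in> {v. linext h e v \<noteq> 0}"
    then obtain w where "w \<in> ?S" "e w * h w v \<noteq> 0" unfolding linext_def
      by (metis (mono_tags, lifting) mem_Collect_eq sum.neutral)
    then show "v \<in> ?T" by auto
  qed
  have "linext g (linext h e) x = (\<Sum>v\<in>?T. linext h e v * g v x)"
    by (rule linext_eq_sum_superset[OF fT sub])
  also have "\<dots> = (\<Sum>v\<in>?T. \<Sum>w\<in>?S. e w * h w v * g v x)"
    by (simp add: linext_def sum_distrib_right)
  also have "\<dots> = (\<Sum>w\<in>?S. e w * (\<Sum>v\<in>?T. h w v * g v x))"
    by (subst sum.swap) (simp add: sum_distrib_left mult.assoc)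
  also have "\<dots> = (\<Sum>w\<in>?S. e w * linext g (h w) x)"
  proof (rule sum.cong[OF refl])
    fix w assume w: "w \<in> ?S"
    have "linext g (h w) x = (\<Sum>v\<in>?T. h w v * g v x)"
      by (rule linext_eq_sum_superset[OF fT]) (use w in auto)
    then show "e w * (\<Sum>v\<in>?T. h w v * g v x) = e w * linext g (h w) x" by simp
  qed
  also have "\<dots> = linext (\<lambda>w. linext g (h w)) e x" by (simp add: linext_def)
  finally show ?thesis .
qed

lemma sum_mult_indicator:
  "finite S \<Longrightarrow> (\<Sum>i\<in>S. g i * (if i = i0 then 1 else 0)) = (if i0 \<in> S then g i0 else (0::'r::comm_ring_1))"
  by (simp add: if_distrib[of "(*) _"] sum.delta cong: if_cong)

lemma list_length_2: "length w = 2 \<Longrightarrow> w = [w ! 0, w ! 1]"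
  by (cases w rule: list.exhaust; cases "tl w") (auto simp: numeral_2_eq_2)

lemma list_length_2_hd_1: "length v = 2 \<Longrightarrow> hd v = 1 \<Longrightarrow> v = [1, v ! 1]"
  by (cases v rule: list.exhaust; cases "tl v") (auto simp: numeral_2_eq_2)

lemma unit_neg_mult_cancel:
  assumes u: "u dvd (1::'r::comm_ring_1)" and e: "- u * a = - u * b"
  shows "a = b"
proof -
  obtain v where v: "1 = u * v" using u by (auto simp: dvd_def)
  have "a = (- v) * (- u * a)" using v by (simp add: algebra_simps)
  also have "\<dots> = b" using e v by (simp add: algebra_simps)
  finally show ?thesis .
qed


lemma lps_zero[simp]: "(\<lambda>i. 0) \<in> lps"
  by (simp add: lps_def)

lemma lps_tpow[simp]: "tpow j \<in> lps"
  by (simp add: lps_def tpow_def)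

lemma lps_add: "p \<in> lps \<Longrightarrow> q \<in> lps \<Longrightarrow> (\<lambda>i. p i + q i) \<in> lps"
  unfolding lps_def by (auto intro: finite_subset[of _ "{i. p i \<noteq> 0} \<union> {i. q i \<noteq> 0}"])

lemma lps_scale: "p \<in> lps \<Longrightarrow> (\<lambda>i. r * p i) \<in> lps"
  unfolding lps_def by (auto intro: finite_subset[of _ "{i. p i \<noteq> 0}"])

lemma lps_diff: "p \<in> lps \<Longrightarrow> q \<in> lps \<Longrightarrow> (\<lambda>i. p i - q i) \<in> lps"
  using lps_add[of p "\<lambda>i. (-1) * q i"] lps_scale[of q "-1"] by simp

lemma lps_lsmult: "p \<in> lps \<Longrightarrow> lsmult r p \<in> lps"
  by (simp add: lsmult_def lps_scale)

lemma support_scaled_shift: "{i. c * p (i - (s::int)) \<noteq> (0::'r::comm_ring_1)} \<subseteq> (\<lambda>i. i + s) ` {i. p i \<noteq> 0}"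
proof
  fix i assume "i \<in> {i. c * p (i - s) \<noteq> 0}"
  then have "i - s \<in> {i. p i \<noteq> 0}" by auto
  then show "i \<in> (\<lambda>i. i + s) ` {i. p i \<noteq> 0}" by (rule rev_image_eqI) simp
qed

lemma lps_scaled_shift: "p \<in> lps \<Longrightarrow> (\<lambda>i. c * p (i - s)) \<in> lps"
  using support_scaled_shift[of c p s] by (auto simp: lps_def intro: finite_subset)

lemma lps_sum: "finite J \<Longrightarrow> (\<forall>j\<in>J. P j \<in> lps) \<Longrightarrow> (\<lambda>i. \<Sum>j\<in>J. P j i) \<in> lps"
  by (induction J rule: finite_induct) (auto intro: lps_add)

lemma lmul_zero_left: "lmul (\<lambda>i. 0) p = (\<lambda>i. 0)"
  by (simp add: lmul_def)

lemma lmul_zero_right: "lmul p (\<lambda>i. 0) = (\<lambda>i. 0)"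
  by (simp add: lmul_def)

lemma lmul_eq_sum_superset:
  assumes "finite S" "{j. p j \<noteq> 0} \<subseteq> S"
  shows "lmul p q i = (\<Sum>j\<in>S. p j * q (i - j))"
  unfolding lmul_def by (rule sum.mono_neutral_left) (use assms in auto)

lemma lps_lmul:
  assumes p: "p \<in> lps" and q: "q \<in> lps"
  shows "lmul p q \<in> lps"
proof -
  let ?S = "{j. p j \<noteq> 0}" and ?T = "{j. q j \<noteq> 0}"
  have fin: "finite ((\<lambda>(a,b). a + b) ` (?S \<times> ?T))" using p q by (simp add: lps_def)
  have "{i. lmul p q i \<noteq> 0} \<subseteq> (\<lambda>(a,b). a + b) ` (?S \<times> ?T)"
  proof
    fix i assume "i \<in> {i. lmul p q i \<noteq> 0}"
    then obtain j where "p j \<noteq> 0" "q (i - j) \<noteq> 0" unfolding lmul_def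
      by (metis (mono_tags, lifting) mem_Collect_eq mult_zero_right sum.neutral)
    then have "(j, i - j) \<in> ?S \<times> ?T" by simp
    then show "i \<in> (\<lambda>(a,b). a + b) ` (?S \<times> ?T)"
      by (rule rev_image_eqI) simp
  qed
  then show ?thesis using fin by (auto simp: lps_def intro: finite_subset)
qed

lemma lmul_commute:
  assumes p: "p \<in> lps" and q: "q \<in> lps"
  shows "lmul p q = lmul q (p :: int \<Rightarrow> 'r::comm_ring_1)"
proof
  fix i
  let ?U = "{j. p j \<noteq> 0} \<union> (\<lambda>k. i - k) ` {j. q j \<noteq> 0}"
  have fU: "finite ?U" using p q by (auto simp: lps_def)
  have "lmul p q i = (\<Sum>j\<in>?U. p j * q (i - j))"
    by (rule lmul_eq_sum_superset) (use fU in auto)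
  also have "\<dots> = (\<Sum>k\<in>(\<lambda>j. i - j) ` ?U. q k * p (i - k))"
    by (subst sum.reindex) (auto simp: inj_on_def mult.commute)
  also have "\<dots> = lmul q p i"
  proof (rule lmul_eq_sum_superset[symmetric])
    show "finite ((\<lambda>j. i - j) ` ?U)" using fU by simp
    show "{j. q j \<noteq> 0} \<subseteq> (\<lambda>j. i - j) ` ?U"
    proof
      fix x assume "x \<in> {j. q j \<noteq> 0}"
      then have "i - x \<in> ?U" by (auto intro: rev_image_eqI[of x])
      then show "x \<in> (\<lambda>j. i - j) ` ?U" by (rule rev_image_eqI) simp
    qed
  qed
  finally show "lmul p q i = lmul q p i" .
qed

lemma lmul_scaled_shift_right:
  "lmul p (\<lambda>i. c * q (i - s)) = (\<lambda>i. c * lmul p q (i - s))"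
  unfolding lmul_def by (auto simp: sum_distrib_left algebra_simps intro!: sum.cong)

lemma lmul_scaled_shift_left:
  assumes p: "p \<in> lps"
  shows "lmul (\<lambda>i. c * p (i - s)) q = (\<lambda>i. c * lmul p q (i - s))"
proof
  fix i
  let ?S = "{j. p j \<noteq> 0}"
  have fS: "finite ?S" using p by (simp add: lps_def)
  have "lmul (\<lambda>i. c * p (i - s)) q i = (\<Sum>j\<in>(\<lambda>j. j + s) ` ?S. c * p (j - s) * q (i - j))"
    by (rule lmul_eq_sum_superset) (use fS support_scaled_shift[of c p s] in auto)
  also have "\<dots> = (\<Sum>j\<in>?S. c * p j * q (i - s - j))"
    by (subst sum.reindex) (auto simp: inj_on_def algebra_simps)
  also have "\<dots> = c * lmul p q (i - s)"
    unfolding lmul_def by (simp add: sum_distrib_left mult.assoc)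
  finally show "lmul (\<lambda>i. c * p (i - s)) q i = c * lmul p q (i - s)" .
qed

lemma chainsN_zero: "(\<lambda>v. 0) \<in> chainsN n"
  by (simp add: chainsN_def)

lemma chainsN_finite: "c \<in> chainsN n \<Longrightarrow> finite {w. c w \<noteq> 0}"
  by (simp add: chainsN_def)

lemma chainsN_length: "c \<in> chainsN n \<Longrightarrow> c w \<noteq> 0 \<Longrightarrow> length w = Suc n"
  by (simp add: chainsN_def)

lemma chainsN_1_word: "c \<in> chainsN 1 \<Longrightarrow> c w \<noteq> 0 \<Longrightarrow> w = [w ! 0, w ! 1]"
  using chainsN_length[of c 1 w] list_length_2[of w] by simp

lemma chains_0: "chains 0 = chainsN 0"
  by (simp add: chains_def)

lemma chains_1: "chains 1 = chainsN 1"
  by (simp add: chains_def)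

lemma chainsN_add: "c1 \<in> chainsN n \<Longrightarrow> c2 \<in> chainsN n \<Longrightarrow> (\<lambda>v. c1 v + c2 v) \<in> chainsN n"
  unfolding chainsN_def
  by (auto intro: finite_subset[of _ "{w. c1 w \<noteq> 0} \<union> {w. c2 w \<noteq> 0}"])
     (metis add.right_neutral add_0)+

lemma chainsN_scale: "c \<in> chainsN n \<Longrightarrow> (\<lambda>v. r * c v) \<in> chainsN n"
  unfolding chainsN_def by (auto intro: finite_subset[of _ "{w. c w \<noteq> 0}"]) (metis mult_zero_right)+

lemma chainsN_sum: "finite J \<Longrightarrow> (\<forall>j\<in>J. C j \<in> chainsN n) \<Longrightarrow> (\<lambda>v. \<Sum>j\<in>J. C j v) \<in> chainsN n"
  by (induction J rule: finite_induct) (auto intro: chainsN_add chainsN_zero)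

lemma bas_in_chainsN: "length w = Suc n \<Longrightarrow> bas w \<in> chainsN n"
  unfolding chainsN_def bas_def by auto

lemma chainsN_eq_sum_bas:
  assumes "c \<in> chainsN n"
  shows "c = (\<lambda>v. \<Sum>w\<in>{w. c w \<noteq> 0}. c w * bas w v)"
proof
  fix v
  have fin: "finite {w. c w \<noteq> 0}" using assms by (rule chainsN_finite)
  show "c v = (\<Sum>w\<in>{w. c w \<noteq> 0}. c w * bas w v)"
  proof (cases "c v = 0")
    case True
    then show ?thesis by (auto simp: bas_apply intro!: sum.neutral)
  next
    case False
    then have "normal_word v" using assms unfolding chainsN_def normal_word_def by auto
    have "(\<Sum>w\<in>{w. c w \<noteq> 0}. c w * bas w v) = (\<Sum>w\<in>{v}. c w * bas w v)"
      by (rule sum.mono_neutral_right) (use fin False in \<open>auto simp: bas_apply\<close>)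
    then show ?thesis using \<open>normal_word v\<close> by (simp add: bas_apply)
  qed
qed

lemma boundaries_nonneg:
  "n \<ge> 0 \<Longrightarrow> boundaries n = linext bd_word ` chainsN (Suc (nat n))"
  unfolding boundaries_def chains_def bd_def
  by (auto simp: nat_add_distrib intro!: image_cong)

lemma zero_in_boundaries: "n \<ge> 0 \<Longrightarrow> (\<lambda>v. 0) \<in> boundaries n"
  by (auto simp: boundaries_nonneg image_iff linext_zero intro!: bexI[OF _ chainsN_zero])

lemma boundaries_add:
  assumes n: "n \<ge> 0" and "c1 \<in> boundaries n" "c2 \<in> boundaries n"
  shows "(\<lambda>v. c1 v + c2 v) \<in> boundaries n"
proof -
  obtain e1 e2 where e: "e1 \<in> chainsN (Suc (nat n))" "e2 \<in> chainsN (Suc (nat n))"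
     "c1 = linext bd_word e1" "c2 = linext bd_word e2"
    using assms by (auto simp: boundaries_nonneg)
  then have "(\<lambda>v. c1 v + c2 v) = linext bd_word (\<lambda>v. e1 v + e2 v)"
    by (auto simp: linext_add chainsN_finite)
  then show ?thesis using e chainsN_add n by (auto simp: boundaries_nonneg)
qed

lemma boundaries_scale:
  assumes n: "n \<ge> 0" and "c \<in> boundaries n"
  shows "(\<lambda>v. r * c v) \<in> boundaries n"
proof -
  obtain e where e: "e \<in> chainsN (Suc (nat n))" "c = linext bd_word e"
    using assms by (auto simp: boundaries_nonneg)
  then have "(\<lambda>v. r * c v) = linext bd_word (\<lambda>v. r * e v)"
    by (auto simp: linext_scale chainsN_finite)
  then show ?thesis using e chainsN_scale n by (auto simp: boundaries_nonneg)
qed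

lemma boundaries_diff:
  assumes n: "n \<ge> 0" and "c1 \<in> boundaries n" "c2 \<in> boundaries n"
  shows "(\<lambda>v. c1 v - c2 v) \<in> boundaries n"
  using boundaries_add[OF n assms(2) boundaries_scale[OF n assms(3), of "-1"]] by simp

lemma boundaries_sum:
  assumes n: "n \<ge> 0"
  shows "finite J \<Longrightarrow> (\<forall>j\<in>J. C j \<in> boundaries n) \<Longrightarrow> (\<lambda>v. \<Sum>j\<in>J. C j v) \<in> boundaries n"
  by (induction J rule: finite_induct) (auto intro: boundaries_add[OF n] zero_in_boundaries[OF n])

lemma bd_word_in_boundaries:
  assumes n: "n \<ge> 0" and l: "length w = Suc (Suc (nat n))" and w: "normal_word w"
  shows "bd_word w \<in> boundaries n"
  unfolding boundaries_nonneg[OF n] by (rule image_eqI[OF _ bas_in_chainsN[OF l]]) (simp add: linext_bas w)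

lemma hclass_eqI:
  assumes n: "n \<ge> 0" and d: "(\<lambda>v. c1 v - c2 v) \<in> boundaries n"
  shows "hclass n c1 = hclass n c2"
proof -
  have "(\<lambda>v. c' v - c1 v) \<in> boundaries n \<longleftrightarrow> (\<lambda>v. c' v - c2 v) \<in> boundaries n" for c'
    using boundaries_add[OF n _ d, of "\<lambda>v. c' v - c1 v"] boundaries_diff[OF n _ d, of "\<lambda>v. c' v - c2 v"]
    by auto
  then show ?thesis by (simp add: hclass_def)
qed

lemma hclass_eqD:
  assumes n: "n \<ge> 0" and c1: "c1 \<in> chains n" and e: "hclass n c1 = hclass n c2"
  shows "(\<lambda>v. c1 v - c2 v) \<in> boundaries n"
proof -
  have "c1 \<in> hclass n c1" using c1 zero_in_boundaries[OF n] by (simp add: hclass_def)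
  then have "c1 \<in> hclass n c2" using e by simp
  then show ?thesis by (simp add: hclass_def)
qed


definition merge_at :: "nat \<Rightarrow> int list \<Rightarrow> int list" where
  "merge_at j as = take (j - 1) as @ [as ! (j - 1) + as ! j] @ drop (j + 1) as"

definition cobd_formula :: "nat \<Rightarrow> (int list \<Rightarrow> int \<Rightarrow> 'r::comm_ring_1) \<Rightarrow> int list \<Rightarrow> int \<Rightarrow> 'r" where
  "cobd_formula q f as = (\<lambda>i. lshift (hd as) (f (tl as)) i
         + (\<Sum>j = 1..q. (-1) ^ j * f (merge_at j as) i)
         + (-1) ^ Suc q * lshift (last as) (f (butlast as)) i)"

lemma cobd_apply:
  "cobd q f as = (if length as = Suc q \<and> (\<forall>a\<in>set as. a \<noteq> 0) then cobd_formula q f as else (\<lambda>i. 0))"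
  unfolding cobd_def cobd_formula_def merge_at_def by (rule refl)

lemma cobd_2: "a \<noteq> 0 \<Longrightarrow> b \<noteq> 0 \<Longrightarrow> cobd 1 f [a, b] i = f [b] (i - a) - f [a + b] i + f [a] (i - b)"
  by (simp add: cobd_apply cobd_formula_def merge_at_def lshift_def)

lemma merge_at_append: "1 \<le> j \<Longrightarrow> j < length b \<Longrightarrow> merge_at j (b @ ys) = merge_at j b @ ys"
  by (auto simp: merge_at_def nth_append)

lemma merge_at_last: "b \<noteq> [] \<Longrightarrow> merge_at (length b) (b @ x # ys) = butlast b @ (last b + x) # ys"
  by (simp add: merge_at_def nth_append butlast_conv_take last_conv_nth)

lemma merge_at_snoc2: "merge_at (Suc (length b)) (b @ [x, y]) = b @ [x + y]"
  by (simp add: merge_at_def nth_append)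

lemma length_merge_at: "1 \<le> j \<Longrightarrow> j < length as \<Longrightarrow> length (merge_at j as) = length as - 1"
  by (simp add: merge_at_def)

lemma cochains_lps: "f \<in> cochains q \<Longrightarrow> f as \<in> lps"
  by (simp add: cochains_def)

lemma cochains_zero_entry: "f \<in> cochains q \<Longrightarrow> 0 \<in> set as \<Longrightarrow> f as i = 0"
  unfolding cochains_def by (metis (mono_tags, lifting) mem_Collect_eq)

lemma cochains_wrong_length: "f \<in> cochains q \<Longrightarrow> length as \<noteq> q \<Longrightarrow> f as i = 0"
  unfolding cochains_def by (metis (mono_tags, lifting) mem_Collect_eq)

lemma cochains_zero: "(\<lambda>as i. 0) \<in> cochains q"
  by (simp add: cochains_def)

lemma cochains_add: "g1 \<in> cochains q \<Longrightarrow> g2 \<in> cochains q \<Longrightarrow> (\<lambda>as i. g1 as i + g2 as i) \<in> cochains q"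
  unfolding cochains_def by (auto simp: lps_add) (metis (no_types) add.right_neutral)+

lemma cochains_diff: "g1 \<in> cochains q \<Longrightarrow> g2 \<in> cochains q \<Longrightarrow> (\<lambda>as i. g1 as i - g2 as i) \<in> cochains q"
  unfolding cochains_def by (auto simp: lps_diff) (metis (no_types) diff_self)+

lemma cobd_zero: "cobd q (\<lambda>as i. 0) = (\<lambda>as i. 0)"
  by (auto simp: cobd_def lshift_def intro!: ext)

lemma cobd_add: "cobd q (\<lambda>as i. g1 as i + g2 as i) = (\<lambda>as i. cobd q g1 as i + cobd q g2 as i)"
  by (auto simp: cobd_def lshift_def sum.distrib algebra_simps intro!: ext)

lemma cobd_diff: "cobd q (\<lambda>as i. g1 as i - g2 as i) = (\<lambda>as i. cobd q g1 as i - cobd q g2 as i)"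
  by (auto simp: cobd_def lshift_def sum_subtractf algebra_simps intro!: ext)

lemma cobd_0: "cobd 0 g = (\<lambda>as i. 0)"
proof (intro ext)
  fix as :: "int list" and i
  show "cobd 0 g as i = 0"
  proof (cases "length as = 1")
    case True
    then obtain a where "as = [a]" by (auto simp: length_Suc_conv)
    then show ?thesis by (simp add: cobd_def lshift_def)
  qed (simp add: cobd_def)
qed

lemma coboundaries_0: "coboundaries 0 = {\<lambda>as i. 0}"
  by (simp add: coboundaries_def)

lemma coboundaries_1: "coboundaries 1 = {\<lambda>as i. 0}"
  using cochains_zero[of 0] by (auto simp: coboundaries_def cobd_0)

lemma coboundaries_add:
  "1 \<le> q \<Longrightarrow> g1 \<in> coboundaries q \<Longrightarrow> g2 \<in> coboundaries q \<Longrightarrow> (\<lambda>as i. g1 as i + g2 as i) \<in> coboundaries q"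
  by (auto simp: coboundaries_def cobd_add[symmetric] intro: cochains_add)

lemma coboundaries_diff:
  "1 \<le> q \<Longrightarrow> g1 \<in> coboundaries q \<Longrightarrow> g2 \<in> coboundaries q \<Longrightarrow> (\<lambda>as i. g1 as i - g2 as i) \<in> coboundaries q"
  by (auto simp: coboundaries_def cobd_diff[symmetric] intro: cochains_diff)

lemma coclass_eqI:
  assumes q: "1 \<le> q" and d: "(\<lambda>as i. f1 as i - f2 as i) \<in> coboundaries q"
  shows "coclass q f1 = coclass q f2"
proof -
  have "(\<lambda>as i. g as i - f1 as i) \<in> coboundaries q \<longleftrightarrow> (\<lambda>as i. g as i - f2 as i) \<in> coboundaries q" for g
    using coboundaries_add[OF q _ d, of "\<lambda>as i. g as i - f1 as i"]
      coboundaries_diff[OF q _ d, of "\<lambda>as i. g as i - f2 as i"] by auto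
  then show ?thesis by (simp add: coclass_def)
qed

lemma coclass_le_1: "q \<le> 1 \<Longrightarrow> f \<in> cochains q \<Longrightarrow> coclass q f = {f}"
  using coboundaries_0 coboundaries_1
  by (cases q) (auto simp: coclass_def le_Suc_eq fun_eq_iff)

section \<open>Vanishing of HH^q for q \<ge> 2\<close>

definition int_range :: "int \<Rightarrow> int set" where
  "int_range x = (if 0 \<le> x then {0..<x} else {x..<0})"

definition int_range_sign :: "int \<Rightarrow> 'r::comm_ring_1" where
  "int_range_sign x = (if 0 \<le> x then 1 else -1)"

lemma int_range_0[simp]: "int_range 0 = {}"
  by (simp add: int_range_def)

text \<open>Signed sums over int_range are discrete integrals from 0 to x, for either sign of x.\<close>
lemma int_range_sum_succ:
  "(\<Sum>j\<in>int_range (x + 1). int_range_sign (x + 1) * F j (x + 1 - j))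
   = (\<Sum>j\<in>int_range x. int_range_sign x * F j (x - j + 1)) + (F x 1 :: 'r::comm_ring_1)"
proof (cases "0 \<le> x")
  case True
  have "{0..<x + 1} = insert x {0..<x}" using True by auto
  then show ?thesis using True by (simp add: int_range_def int_range_sign_def algebra_simps)
next
  case False
  have e: "{x..<0} = insert x {x + 1..<0}" using False by auto
  have "(\<Sum>j\<in>int_range (x + 1). int_range_sign (x + 1) * F j (x + 1 - j))
      = - (\<Sum>j\<in>{x + 1..<0}. F j (x - j + 1))"
    using False by (cases "x = -1") (auto simp: int_range_def int_range_sign_def sum_negf algebra_simps)
  moreover have "(\<Sum>j\<in>int_range x. int_range_sign x * F j (x - j + 1))
      = - F x 1 - (\<Sum>j\<in>{x + 1..<0}. F j (x - j + 1))"
    using False by (simp add: int_range_def int_range_sign_def e sum_negf)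
  ultimately show ?thesis by simp
qed

definition telescope :: "(int list \<Rightarrow> int \<Rightarrow> 'r::comm_ring_1) \<Rightarrow> int list \<Rightarrow> int \<Rightarrow> int \<Rightarrow> 'r" where
  "telescope f c x = (\<lambda>i. \<Sum>j\<in>int_range x. int_range_sign x * f (c @ [j, 1]) (i - (x - j - 1)))"

lemma telescope_0: "telescope f c 0 i = 0"
  by (simp add: telescope_def)

lemma telescope_succ: "telescope f c (x + 1) i = telescope f c x (i - 1) + f (c @ [x, 1]) i"
  using int_range_sum_succ[where F = "\<lambda>j d. f (c @ [j, 1]) (i - (d - 1))" and x = x]
  by (simp add: telescope_def algebra_simps)

lemma telescope_lps: "(\<forall>as. f as \<in> lps) \<Longrightarrow> telescope f c x \<in> lps"
  unfolding telescope_def by (rule lps_sum) (auto simp: int_range_def intro!: lps_scaled_shift)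

lemma telescope_zero_entry:
  assumes "f \<in> cochains q" "0 \<in> set c"
  shows "telescope f c x = (\<lambda>i. 0)"
  using cochains_zero_entry[OF assms(1), of "c @ [_, 1]"] assms(2) by (simp add: telescope_def)

text \<open>contraction f m (b, t^x) = \<plusminus>\<Sum>_(j from 0 to x) t^(x-j-1) f(b, t^j, t): summing the
  cocycle identity of f at (b, t^j, t) over j telescopes to f(b, t^x).\<close>
definition contraction :: "(int list \<Rightarrow> int \<Rightarrow> 'r::comm_ring_1) \<Rightarrow> nat \<Rightarrow> int list \<Rightarrow> int \<Rightarrow> 'r" where
  "contraction f m as = (if length as = Suc m
     then (\<lambda>i. (-1) ^ Suc m * telescope f (butlast as) (last as) i) else (\<lambda>i. 0))"

lemma contraction_in_cochains:
  assumes f: "f \<in> cochains (Suc (Suc m))"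
  shows "contraction f m \<in> cochains (Suc m)"
  unfolding cochains_def
proof (intro CollectI conjI allI impI)
  fix as
  have "(\<lambda>i. (-1) ^ Suc m * telescope f (butlast as) (last as) i) \<in> lps"
    by (rule lps_scale[OF telescope_lps]) (use cochains_lps[OF f] in auto)
  then show "contraction f m as \<in> lps" by (simp add: contraction_def)
  assume nz: "contraction f m as \<noteq> (\<lambda>i. 0)"
  then show l: "length as = Suc m" by (auto simp: contraction_def split: if_splits)
  then have as: "as = butlast as @ [last as]" by (auto intro: append_butlast_last_id[symmetric])
  show "\<forall>a\<in>set as. a \<noteq> 0"
  proof (rule ccontr)
    assume "\<not> (\<forall>a\<in>set as. a \<noteq> 0)"
    then have "last as = 0 \<or> 0 \<in> set (butlast as)"
      by (metis as Un_iff empty_iff insert_iff set_append set_simps)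
    then have "telescope f (butlast as) (last as) = (\<lambda>i. 0)"
      using telescope_zero_entry[OF f, of "butlast as"] by (auto simp: telescope_0 fun_eq_iff)
    then show False using nz l by (simp add: contraction_def)
  qed
qed

context
  fixes f :: "int list \<Rightarrow> int \<Rightarrow> 'r::comm_ring_1" and m :: nat and b :: "int list"
  assumes f_cochain: "f \<in> cochains (Suc (Suc m))"
    and f_cocycle: "cobd (Suc (Suc m)) f = (\<lambda>as i. 0)"
    and b_length: "length b = Suc m" and b_nonzero: "\<forall>a\<in>set b. a \<noteq> 0"
begin

definition cobd_contraction_expr :: "int \<Rightarrow> int \<Rightarrow> 'r" where
  "cobd_contraction_expr x i = lshift (hd b) (telescope f (tl b) x) i
     + (\<Sum>j = 1..m. (-1) ^ j * telescope f (merge_at j b) x i)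
     + (-1) ^ Suc m * telescope f (butlast b) (last b + x) i
     + (-1) ^ m * lshift x (telescope f (butlast b) (last b)) i"

definition cocycle_expr :: "int \<Rightarrow> int \<Rightarrow> 'r" where
  "cocycle_expr x i = lshift (hd b) (f (tl b @ [x, 1])) i
     + (\<Sum>j = 1..m. (-1) ^ j * f (merge_at j b @ [x, 1]) i)
     + (-1) ^ Suc m * f (butlast b @ [last b + x, 1]) i"

lemma b_not_Nil: "b \<noteq> []"
  using b_length by auto

text \<open>The cocycle identity of f at the word b @ [x, 1].\<close>
lemma cocycle_expr_eq: "cocycle_expr x i = (-1) ^ Suc m * f (b @ [x + 1]) i + (-1) ^ m * f (b @ [x]) (i - 1)"
proof (cases "x = 0")
  case False
  let ?as = "b @ [x, 1]"
  have "cobd (Suc (Suc m)) f ?as i = 0" using f_cocycle by simp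
  then have z: "cobd_formula (Suc (Suc m)) f ?as i = 0"
    using b_length b_nonzero False by (simp add: cobd_apply)
  have "(\<Sum>j = 1..m. (-1) ^ j * f (merge_at j ?as) i) = (\<Sum>j = 1..m. (-1) ^ j * f (merge_at j b @ [x, 1]) i)"
    by (rule sum.cong) (auto simp: merge_at_append b_length)
  moreover have "merge_at (Suc m) ?as = butlast b @ [last b + x, 1]"
    using merge_at_last[OF b_not_Nil, of x "[1]"] b_length by simp
  moreover have "merge_at (Suc (Suc m)) ?as = b @ [x + 1]"
    using merge_at_snoc2[of b x 1] b_length by simp
  ultimately have "(\<Sum>j = 1..Suc (Suc m). (-1) ^ j * f (merge_at j ?as) i)
      = (\<Sum>j = 1..m. (-1) ^ j * f (merge_at j b @ [x, 1]) i)
        + (-1) ^ Suc m * f (butlast b @ [last b + x, 1]) i + (-1) ^ Suc (Suc m) * f (b @ [x + 1]) i"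
    by simp
  moreover have "hd ?as = hd b" "tl ?as = tl b @ [x, 1]" "last ?as = 1" "butlast ?as = b @ [x]"
    using b_not_Nil by (auto simp: butlast_append)
  ultimately have "cobd_formula (Suc (Suc m)) f ?as i = cocycle_expr x i + (-1) ^ m * f (b @ [x + 1]) i
      - (-1) ^ m * f (b @ [x]) (i - 1)"
    unfolding cobd_formula_def cocycle_expr_def by (simp add: lshift_def algebra_simps)
  with z show ?thesis by (simp add: algebra_simps)
next
  case True
  have e: "butlast b @ [last b, 1] = b @ [1]" using b_not_Nil by simp
  show ?thesis
    using True cochains_zero_entry[OF f_cochain] by (simp add: cocycle_expr_def lshift_def e)
qed

lemma cobd_contraction_expr_succ:
  "cobd_contraction_expr (x + 1) i = cobd_contraction_expr x (i - 1) + cocycle_expr x i"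
proof -
  have "(\<Sum>j = 1..m. (-1) ^ j * telescope f (merge_at j b) (x + 1) i)
      = (\<Sum>j = 1..m. (-1) ^ j * telescope f (merge_at j b) x (i - 1))
        + (\<Sum>j = 1..m. (-1) ^ j * f (merge_at j b @ [x, 1]) i)"
    by (simp add: telescope_succ sum.distrib distrib_left)
  moreover have "telescope f (butlast b) (last b + (x + 1)) i
      = telescope f (butlast b) (last b + x) (i - 1) + f (butlast b @ [last b + x, 1]) i"
    using telescope_succ[of f "butlast b" "last b + x" i] by (simp add: add.assoc)
  moreover have "telescope f (tl b) (x + 1) (i - hd b)
      = telescope f (tl b) x (i - hd b - 1) + f (tl b @ [x, 1]) (i - hd b)"
    by (rule telescope_succ)
  ultimately show ?thesis
    by (simp add: cobd_contraction_expr_def cocycle_expr_def lshift_def algebra_simps)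
qed

lemma cobd_contraction_expr_eq: "cobd_contraction_expr x i = (-1) ^ Suc m * f (b @ [x]) i"
proof (induction x arbitrary: i rule: int_induct[where k = 0])
  case base
  show ?case
    using cochains_zero_entry[OF f_cochain] by (simp add: cobd_contraction_expr_def telescope_0 lshift_def)
next
  case (step1 x)
  show ?case
    using step1.IH[of "i - 1"] cobd_contraction_expr_succ[of x i] cocycle_expr_eq[of x i]
    by (simp add: algebra_simps)
next
  case (step2 x)
  have "cobd_contraction_expr (x - 1) i = cobd_contraction_expr x (i + 1) - cocycle_expr (x - 1) (i + 1)"
    using cobd_contraction_expr_succ[of "x - 1" "i + 1"] by simp
  also have "\<dots> = (-1) ^ Suc m * f (b @ [x - 1]) i"
    using step2.IH[of "i + 1"] cocycle_expr_eq[of "x - 1" "i + 1"] by (simp add: algebra_simps)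
  finally show ?case .
qed

lemma cobd_contraction_snoc:
  assumes x: "x \<noteq> 0"
  shows "cobd (Suc m) (contraction f m) (b @ [x]) i = f (b @ [x]) i"
proof -
  let ?as = "b @ [x]" and ?s = "(-1) ^ Suc m :: 'r"
  have t2: "contraction f m (merge_at j ?as) = (\<lambda>i. ?s * telescope f (merge_at j b) x i)"
    if "1 \<le> j" "j \<le> m" for j
    using that b_length by (simp add: merge_at_append length_merge_at contraction_def)
  have t3: "contraction f m (merge_at (Suc m) ?as) = (\<lambda>i. ?s * telescope f (butlast b) (last b + x) i)"
    using merge_at_last[OF b_not_Nil, of x "[]"] b_length by (simp add: contraction_def)
  have "(\<Sum>j = 1..Suc m. (-1) ^ j * contraction f m (merge_at j ?as) i)
      = (\<Sum>j = 1..m. (-1) ^ j * (?s * telescope f (merge_at j b) x i))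
        + ?s * (?s * telescope f (butlast b) (last b + x) i)"
    by (simp add: t2 t3)
  then have "cobd (Suc m) (contraction f m) ?as i = ?s * cobd_contraction_expr x i"
    using b_length b_nonzero x b_not_Nil
    by (simp add: cobd_apply cobd_formula_def cobd_contraction_expr_def contraction_def lshift_def
        sum_distrib_left algebra_simps)
  then show ?thesis by (simp add: cobd_contraction_expr_eq)
qed

end

lemma cobd_contraction:
  assumes f: "f \<in> cochains (Suc (Suc m))" and cocycle: "cobd (Suc (Suc m)) f = (\<lambda>as i. 0)"
  shows "cobd (Suc m) (contraction f m) = f"
proof (intro ext)
  fix as i
  show "cobd (Suc m) (contraction f m) as i = f as i"
  proof (cases "length as = Suc (Suc m) \<and> (\<forall>a\<in>set as. a \<noteq> 0)")
    case True
    then have ne: "as \<noteq> []" by auto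
    then have "as = butlast as @ [last as]" by simp
    moreover have "last as \<noteq> 0" "\<forall>a\<in>set (butlast as). a \<noteq> 0"
      using True last_in_set[OF ne] by (auto dest: in_set_butlastD)
    ultimately show ?thesis
      using cobd_contraction_snoc[OF f cocycle, of "butlast as" "last as" i] True by simp
  next
    case False
    then show ?thesis using cochains_zero_entry[OF f] cochains_wrong_length[OF f]
      by (auto simp: cobd_apply)
  qed
qed

lemma HHco_ge_2:
  assumes q: "2 \<le> q"
  shows "HHco q = {coclass q (\<lambda>as i. 0 :: 'r::comm_ring_1)}"
proof -
  obtain m where qm: "q = Suc (Suc m)" using q by (metis add_2_eq_Suc le_iff_add)
  have "coclass q f = coclass q (\<lambda>as i. 0)" if f: "f \<in> cocycles q" for f :: "int list \<Rightarrow> int \<Rightarrow> 'r"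
  proof (rule coclass_eqI)
    have "f \<in> cochains (Suc (Suc m))" "cobd (Suc (Suc m)) f = (\<lambda>as i. 0)"
      using f by (auto simp: cocycles_def qm)
    then show "(\<lambda>as i. f as i - 0) \<in> coboundaries q"
      using cobd_contraction contraction_in_cochains by (force simp: coboundaries_def qm)
  qed (use q in simp)
  moreover have "(\<lambda>as i. 0) \<in> cocycles q" by (simp add: cocycles_def cochains_zero cobd_zero)
  ultimately show ?thesis by (auto simp: HHco_def)
qed


section \<open>Hochschild homology in degrees \<le> 1\<close>

lemma bd_word_2: "bd_word [a, c] = (\<lambda>v. 0 :: 'r::comm_ring_1)"
  by (simp add: bd_word_def face_def add.commute)

lemma bd_word_3:
  "bd_word [x, y, a] = (\<lambda>v. bas [y, a + x] v - bas [x + y, a] v + (bas [x, y + a] v :: 'r::comm_ring_1))"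
  by (simp add: bd_word_def face_def)

lemma bd_word_4:
  "bd_word [x, y, z, a] = (\<lambda>v. bas [y, z, a + x] v - bas [x + y, z, a] v + bas [x, y + z, a] v
     - (bas [x, y, z + a] v :: 'r::comm_ring_1))"
proof -
  have "(\<Sum>i::nat = 0..3. g i) = g 0 + g 1 + g 2 + (g 3 :: 'r)" for g
    by (simp add: eval_nat_numeral add.assoc)
  then show ?thesis by (intro ext) (simp add: bd_word_def face_def numeral_3_eq_3)
qed

lemma bd_word_3_not_normal: "\<not> normal_word [x, y, a] \<Longrightarrow> bd_word [x, y, a] = (\<lambda>v. 0 :: 'r::comm_ring_1)"
  by (auto simp: bd_word_3 normal_word_3 normal_word_2 bas_apply)

lemma bd_word_4_not_normal: "\<not> normal_word [x, y, z, a] \<Longrightarrow> bd_word [x, y, z, a] = (\<lambda>v. 0 :: 'r::comm_ring_1)"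
  by (auto simp: bd_word_4 normal_word_4 normal_word_3 bas_apply)

lemma bd_word_3_in_boundaries: "bd_word [x, y, a] \<in> (boundaries 1 :: (int list \<Rightarrow> 'r::comm_ring_1) set)"
proof (cases "normal_word [x, y, a]")
  case True
  then show ?thesis by (intro bd_word_in_boundaries) simp_all
next
  case False
  then have "bd_word [x, y, a] = (\<lambda>v. 0 :: 'r)" by (rule bd_word_3_not_normal)
  then show ?thesis using zero_in_boundaries[of 1] by simp
qed

lemma connesB_word_1: "connesB_word [m] = bas [m, 0]"
  by (simp add: connesB_word_def)

lemma connesB_word_2: "connesB_word [a, c] = (\<lambda>v. bas [c, a, 0] v - (bas [a, c, 0] v :: 'r::comm_ring_1))"
  by (simp add: connesB_word_def rotate1_def)

text \<open>
  Summing the boundaries of t^x \<otimes> t^j \<otimes> t \<otimes> t^(a+y-j-1) over j between 0 and y telescopes: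
  the 2-chain t^x \<otimes> t^y \<otimes> t^a is congruent to pivot_remainder x y a, built from chains with
  middle entry t only. For a = 0 this remainder is symmetric in x and y.
\<close>
definition pivot_chain :: "int \<Rightarrow> int \<Rightarrow> int \<Rightarrow> int list \<Rightarrow> 'r::comm_ring_1" where
  "pivot_chain x y a v = (\<Sum>j\<in>int_range y. int_range_sign y * bas [x, j, 1, a + (y - j) - 1] v)"

definition pivot_boundary :: "int \<Rightarrow> int \<Rightarrow> int \<Rightarrow> int list \<Rightarrow> 'r::comm_ring_1" where
  "pivot_boundary x y a v = (\<Sum>j\<in>int_range y. int_range_sign y * bd_word [x, j, 1, a + (y - j) - 1] v)"

definition pivot_sum :: "int \<Rightarrow> int \<Rightarrow> int list \<Rightarrow> 'r::comm_ring_1" where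
  "pivot_sum z a v = - (\<Sum>j\<in>int_range z. int_range_sign z * bas [j, 1, a + (z - j) - 1] v)"

definition pivot_remainder :: "int \<Rightarrow> int \<Rightarrow> int \<Rightarrow> int list \<Rightarrow> 'r::comm_ring_1" where
  "pivot_remainder x y a v = pivot_sum y (a + x) v - pivot_sum (x + y) a v + pivot_sum x (y + a) v"

lemma pivot_boundary_succ:
  "pivot_boundary x (y + 1) a v = pivot_boundary x y (a + 1) v + (bd_word [x, y, 1, a] v :: 'r::comm_ring_1)"
  using int_range_sum_succ[where F = "\<lambda>j d. bd_word [x, j, 1, a + d - 1] v :: 'r" and x = y]
  by (simp add: pivot_boundary_def algebra_simps)

lemma pivot_sum_succ: "pivot_sum (z + 1) a v = pivot_sum z (a + 1) v - (bas [z, 1, a] v :: 'r::comm_ring_1)"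
  using int_range_sum_succ[where F = "\<lambda>j d. bas [j, 1, a + d - 1] v :: 'r" and x = z]
  by (simp add: pivot_sum_def algebra_simps)

lemma bas_3_decomposition_succ:
  "pivot_boundary x (y + 1) a v + pivot_remainder x (y + 1) a v =
   pivot_boundary x y (a + 1) v + pivot_remainder x y (a + 1) v + bas [x, y + 1, a] v
   - (bas [x, y, a + 1] v :: 'r::comm_ring_1)"
proof -
  have "pivot_sum (y + 1) (a + x) v = pivot_sum y (a + 1 + x) v - (bas [y, 1, a + x] v :: 'r)"
    using pivot_sum_succ[of y "a + x" v] by (simp add: algebra_simps)
  moreover have "pivot_sum (x + (y + 1)) a v = pivot_sum (x + y) (a + 1) v - (bas [x + y, 1, a] v :: 'r)"
    using pivot_sum_succ[of "x + y" a v] by (simp add: algebra_simps)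
  moreover have "pivot_sum x (y + 1 + a) v = (pivot_sum x (y + (a + 1)) v :: 'r)"
    by (simp add: algebra_simps)
  ultimately show ?thesis
    unfolding pivot_boundary_succ pivot_remainder_def bd_word_4 by (simp add: algebra_simps)
qed

lemma bas_3_decomposition:
  "pivot_boundary x y a v + pivot_remainder x y a v = (bas [x, y, a] v :: 'r::comm_ring_1)"
proof (induction y arbitrary: a rule: int_induct[where k = 0])
  case base
  show ?case by (simp add: pivot_boundary_def pivot_remainder_def pivot_sum_def bas_apply normal_word_3)
next
  case (step1 y)
  show ?case unfolding bas_3_decomposition_succ step1.IH[of "a + 1"] by simp
next
  case (step2 y)
  show ?case
    using bas_3_decomposition_succ[of x "y - 1" "a - 1" v, where 'r='r] step2.IH[of "a - 1"]
    by (simp add: algebra_simps)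
qed

lemma pivot_boundary_in_boundaries:
  "pivot_boundary x y a \<in> (boundaries 2 :: (int list \<Rightarrow> 'r::comm_ring_1) set)"
proof -
  have "pivot_chain x y a \<in> (chainsN 3 :: (int list \<Rightarrow> 'r) set)"
    unfolding pivot_chain_def[abs_def]
    by (rule chainsN_sum) (auto simp: int_range_def intro!: chainsN_scale bas_in_chainsN)
  moreover have "linext bd_word (pivot_chain x y a) = (pivot_boundary x y a :: int list \<Rightarrow> 'r)"
  proof
    fix v
    have "linext bd_word (\<lambda>v. pivot_chain x y a v) v =
        (\<Sum>j\<in>int_range y. int_range_sign y * (if normal_word [x, j, 1, a + (y - j) - 1]
           then bd_word [x, j, 1, a + (y - j) - 1] v else (0::'r)))"
      unfolding pivot_chain_def by (rule linext_sum_bas) (simp add: int_range_def)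
    also have "\<dots> = pivot_boundary x y a v"
      unfolding pivot_boundary_def by (rule sum.cong) (auto simp: bd_word_4_not_normal)
    finally show "linext bd_word (pivot_chain x y a) v = (pivot_boundary x y a v :: 'r)" .
  qed
  ultimately show ?thesis by (force simp: boundaries_nonneg numeral_3_eq_3)
qed

lemma connesB_word_2_in_boundaries:
  "connesB_word [a, c] \<in> (boundaries 2 :: (int list \<Rightarrow> 'r::comm_ring_1) set)"
proof -
  have "pivot_remainder c a 0 v = (pivot_remainder a c 0 v :: 'r)" for v
    by (simp add: pivot_remainder_def add.commute)
  moreover have "connesB_word [a, c] v = (pivot_boundary c a 0 v + pivot_remainder c a 0 v)
      - (pivot_boundary a c 0 v + pivot_remainder a c 0 v :: 'r)" for v
    by (simp only: bas_3_decomposition connesB_word_2)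
  ultimately have "connesB_word [a, c] = (\<lambda>v. pivot_boundary c a 0 v - (pivot_boundary a c 0 v :: 'r))"
    by (auto simp: fun_eq_iff)
  then show ?thesis
    using boundaries_diff[OF _ pivot_boundary_in_boundaries pivot_boundary_in_boundaries] by simp
qed

lemma connesB_1_in_boundaries:
  assumes x: "x \<in> chains 1"
  shows "connesB 1 x \<in> (boundaries 2 :: (int list \<Rightarrow> 'r::comm_ring_1) set)"
proof -
  have xN: "x \<in> chainsN 1" using x by (simp only: chains_1)
  have "connesB_word w \<in> (boundaries 2 :: (int list \<Rightarrow> 'r) set)" if "x w \<noteq> 0" for w
    using connesB_word_2_in_boundaries chainsN_1_word[OF xN that] by metis
  then have "(\<lambda>v. \<Sum>w\<in>{w. x w \<noteq> 0}. x w * connesB_word w v) \<in> (boundaries 2 :: (int list \<Rightarrow> 'r) set)"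
    by (intro boundaries_sum chainsN_finite[OF xN] ballI boundaries_scale) auto
  then show ?thesis by (simp add: connesB_def linext_def)
qed

text \<open>The boundary of t^x \<otimes> t \<otimes> t^a is the Leibniz rule d t^(x+1) = t^x dt + t dt^x.\<close>
lemma bas_2_homologous:
  "(\<lambda>v. bas [x, a] v - of_int x * bas [1, x + a - 1] v) \<in> (boundaries 1 :: (int list \<Rightarrow> 'r::comm_ring_1) set)"
proof (induction x arbitrary: a rule: int_induct[where k = 0])
  case base
  show ?case using zero_in_boundaries[of 1] by (simp add: bas_apply normal_word_2)
next
  case (step1 x)
  have "(\<lambda>v. bas [x + 1, a] v - of_int (x + 1) * bas [1, x + 1 + a - 1] v) =
     (\<lambda>v. (bas [x, a + 1] v - of_int x * bas [1, x + (a + 1) - 1] v) - (bd_word [x, 1, a] v :: 'r))"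
    by (rule ext) (simp add: bd_word_3 algebra_simps)
  then show ?case using boundaries_diff[OF _ step1.IH[of "a + 1"] bd_word_3_in_boundaries] by simp
next
  case (step2 x)
  have "(\<lambda>v. bas [x - 1, a] v - of_int (x - 1) * bas [1, x - 1 + a - 1] v) =
     (\<lambda>v. (bas [x, a - 1] v - of_int x * bas [1, x + (a - 1) - 1] v) + (bd_word [x - 1, 1, a - 1] v :: 'r))"
    by (rule ext) (simp add: bd_word_3 algebra_simps)
  then show ?case using boundaries_add[OF _ step2.IH[of "a - 1"] bd_word_3_in_boundaries] by simp
qed

lemma bd_chainsN_1:
  assumes e: "e \<in> chainsN 1"
  shows "linext bd_word e = (\<lambda>v. 0 :: 'r::comm_ring_1)"
proof -
  have "bd_word w = (\<lambda>v. 0 :: 'r)" if "e w \<noteq> 0" for w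
    using bd_word_2 chainsN_1_word[OF e that] by metis
  then show ?thesis by (auto simp: linext_def fun_eq_iff intro!: sum.neutral)
qed

lemma boundaries_0: "boundaries 0 = {\<lambda>v. 0 :: 'r::comm_ring_1}"
  using bd_chainsN_1 chainsN_zero[of 1] by (auto simp: boundaries_nonneg)

lemma hclass_0: "c \<in> chains 0 \<Longrightarrow> hclass 0 c = {c}"
  by (auto simp: hclass_def boundaries_0 fun_eq_iff)

lemma cycles_1: "cycles 1 = (chains 1 :: (int list \<Rightarrow> 'r::comm_ring_1) set)"
  using bd_chainsN_1 by (auto simp: cycles_def bd_def chains_1)

lemma HHho_0: "HHho 0 = (\<lambda>c. {c}) ` (chains 0 :: (int list \<Rightarrow> 'r::comm_ring_1) set)"
  by (auto simp: HHho_def cycles_def bd_def hclass_0)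

lemma hclass_neg:
  assumes "n < 0"
  shows "hclass n c = (if c = (\<lambda>v. 0) then {\<lambda>v. 0 :: 'r::comm_ring_1} else {})"
proof -
  have "boundaries n = {\<lambda>v. 0 :: 'r}"
    using assms chainsN_zero by (auto simp: boundaries_def bd_def chains_def)
  then show ?thesis using assms by (auto simp: hclass_def chains_def fun_eq_iff)
qed

lemma HHho_neg: "n < 0 \<Longrightarrow> HHho n = {{\<lambda>v. 0 :: 'r::comm_ring_1}}"
  by (auto simp: HHho_def cycles_def bd_def hclass_neg chains_def)


section \<open>Hochschild cohomology in degrees 0 and 1\<close>

text \<open>The 1-cochain p y, i.e. the derivation t^a \<mapsto> -a t^(a-1) p.\<close>
definition der_cochain :: "(int \<Rightarrow> 'r::comm_ring_1) \<Rightarrow> int list \<Rightarrow> int \<Rightarrow> 'r" where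
  "der_cochain p = (\<lambda>as. if length as = 1 \<and> hd as \<noteq> 0
     then (\<lambda>i. - of_int (hd as) * p (i - (hd as - 1))) else (\<lambda>i. 0))"

lemma der_cochain_single: "a \<noteq> 0 \<Longrightarrow> der_cochain p [a] = (\<lambda>i. - of_int a * p (i - (a - 1)))"
  by (simp add: der_cochain_def)

lemma der_cochain_tpow_0: "der_cochain (tpow 0) = yder"
  by (auto simp: der_cochain_def yder_def tpow_def fun_eq_iff)

lemma der_cochain_in_cochains: "p \<in> lps \<Longrightarrow> der_cochain p \<in> cochains 1"
  unfolding cochains_def
proof (intro CollectI conjI allI impI)
  fix as assume "p \<in> lps"
  then show "der_cochain p as \<in> lps"
    using lps_scaled_shift[of p "- of_int (hd as)" "hd as - 1"] by (simp add: der_cochain_def)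
next
  fix as assume "der_cochain p as \<noteq> (\<lambda>i. 0)"
  then have "length as = 1" "hd as \<noteq> 0" by (auto simp: der_cochain_def split: if_splits)
  then show "length as = 1" "\<forall>a\<in>set as. a \<noteq> 0" by (auto simp: length_Suc_conv)
qed

lemma der_cochain_in_cocycles: "p \<in> lps \<Longrightarrow> der_cochain p \<in> cocycles 1"
proof -
  assume p: "p \<in> lps"
  have "cobd 1 (der_cochain p) as i = 0" for as i
  proof (cases "length as = 2 \<and> (\<forall>a\<in>set as. a \<noteq> 0)")
    case True
    then obtain a b where ab: "as = [a, b]" "a \<noteq> 0" "b \<noteq> 0"
      by (auto simp: numeral_2_eq_2 length_Suc_conv)
    have "cobd 1 (der_cochain p) as i
        = der_cochain p [b] (i - a) - der_cochain p [a + b] i + der_cochain p [a] (i - b)"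
      unfolding ab(1) by (rule cobd_2[OF ab(2,3)])
    also have "\<dots> = 0"
    proof (cases "a + b = 0")
      case True
      then have "b = - a" by simp
      then show ?thesis using ab by (simp add: der_cochain_def algebra_simps)
    qed (use ab in \<open>simp add: der_cochain_def algebra_simps\<close>)
    finally show ?thesis .
  qed (auto simp: cobd_apply)
  then show ?thesis using der_cochain_in_cochains[OF p] by (auto simp: cocycles_def fun_eq_iff)
qed

text \<open>The cocycle identity at (t, t^j) gives f(t^(j+1)) = t f(t^j) + t^j f(t), hence
  f(t^j) = j t^(j-1) f(t).\<close>
lemma cocycle_1_eq_der_cochain:
  assumes f: "f \<in> cocycles 1"
  shows "f = der_cochain (\<lambda>i. - f [1] i)"
proof -
  have fco: "f \<in> cochains 1" and fcy: "cobd 1 f = (\<lambda>as i. 0)" using f by (auto simp: cocycles_def)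
  have f0: "f [0] i = 0" for i by (rule cochains_zero_entry[OF fco]) simp
  have rel: "f [j + 1] i = f [j] (i - 1) + f [1] (i - j)" for j i
    using cobd_2[of 1 j f i] fcy f0 by (cases "j = 0") (auto simp: algebra_simps)
  have val: "f [j] i = of_int j * f [1] (i - (j - 1))" for j i
  proof (induction j arbitrary: i rule: int_induct[where k = 0])
    case (step1 j)
    show ?case using rel[of j i] step1.IH[of "i - 1"] by (simp add: algebra_simps)
  next
    case (step2 j)
    show ?case using rel[of "j - 1" "i + 1"] step2.IH[of "i + 1"] by (simp add: algebra_simps)
  qed (simp add: f0)
  show ?thesis
  proof (intro ext)
    fix as i
    show "f as i = der_cochain (\<lambda>i. - f [1] i) as i"
    proof (cases "length as = 1")
      case True
      then obtain j where "as = [j]" by (auto simp: length_Suc_conv)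
      then show ?thesis using val[of j i] by (cases "j = 0") (simp_all add: der_cochain_def f0)
    qed (simp add: der_cochain_def cochains_wrong_length[OF fco])
  qed
qed

lemma cocycles_1: "cocycles 1 = der_cochain ` (lps :: (int \<Rightarrow> 'r::comm_ring_1) set)"
proof
  show "cocycles 1 \<subseteq> der_cochain ` (lps :: (int \<Rightarrow> 'r) set)"
  proof
    fix f :: "int list \<Rightarrow> int \<Rightarrow> 'r" assume f: "f \<in> cocycles 1"
    have "(\<lambda>i. - f [1] i) \<in> lps"
      using lps_scale[OF cochains_lps[of f 1 "[1]"], of "-1"] f by (simp add: cocycles_def)
    then show "f \<in> der_cochain ` lps" using cocycle_1_eq_der_cochain[OF f] by (metis image_eqI)
  qed
qed (use der_cochain_in_cocycles in blast)

lemma der_cochain_inj: "der_cochain p = der_cochain p' \<Longrightarrow> p = p'"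
  by (drule fun_cong[of _ _ "[1]"]) (simp add: der_cochain_def fun_eq_iff)

lemma cochain0_inj: "cochain0 p = cochain0 p' \<Longrightarrow> p = p'"
  by (metis cochain0_def)

lemma cochain0_in_cochains: "p \<in> lps \<Longrightarrow> cochain0 p \<in> cochains 0"
  by (auto simp: cochains_def cochain0_def)

lemma cochains_0: "cochains 0 = cochain0 ` (lps :: (int \<Rightarrow> 'r::comm_ring_1) set)"
proof
  show "cochains 0 \<subseteq> cochain0 ` (lps :: (int \<Rightarrow> 'r) set)"
  proof
    fix f :: "int list \<Rightarrow> int \<Rightarrow> 'r" assume f: "f \<in> cochains 0"
    then have "f = cochain0 (f [])"
      using cochains_wrong_length[OF f] by (auto simp: cochain0_def fun_eq_iff)
    then show "f \<in> cochain0 ` lps" using cochains_lps[OF f] by (metis image_eqI)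
  qed
qed (auto intro: cochain0_in_cochains)

definition HH0_class :: "(int \<Rightarrow> 'r::comm_ring_1) \<Rightarrow> (int list \<Rightarrow> int \<Rightarrow> 'r) set" where
  "HH0_class p = coclass 0 (cochain0 p)"

definition HH1_class :: "(int \<Rightarrow> 'r::comm_ring_1) \<Rightarrow> (int list \<Rightarrow> int \<Rightarrow> 'r) set" where
  "HH1_class p = coclass 1 (der_cochain p)"

lemma HH0_class_eq: "p \<in> lps \<Longrightarrow> HH0_class p = {cochain0 p}"
  unfolding HH0_class_def by (rule coclass_le_1) (auto intro: cochain0_in_cochains)

lemma HH1_class_eq: "p \<in> lps \<Longrightarrow> HH1_class p = {der_cochain p}"
  unfolding HH1_class_def by (rule coclass_le_1[OF _ der_cochain_in_cochains]) simp_all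

lemma HHco_0: "HHco 0 = (\<lambda>p. {cochain0 p}) ` (lps :: (int \<Rightarrow> 'r::comm_ring_1) set)"
proof -
  have "cocycles 0 = (cochains 0 :: (int list \<Rightarrow> int \<Rightarrow> 'r) set)"
    by (simp add: cocycles_def cobd_0)
  then show ?thesis by (auto simp: HHco_def cochains_0 coclass_le_1 cochain0_in_cochains)
qed

lemma HHco_1: "HHco 1 = (\<lambda>p. {der_cochain p}) ` (lps :: (int \<Rightarrow> 'r::comm_ring_1) set)"
proof -
  have "HHco 1 = (\<lambda>f. {f}) ` (cocycles 1 :: (int list \<Rightarrow> int \<Rightarrow> 'r) set)"
    unfolding HHco_def by (rule image_cong[OF refl]) (simp add: coclass_le_1 cocycles_def)
  also have "\<dots> = (\<lambda>f. {f}) ` der_cochain ` (lps :: (int \<Rightarrow> 'r) set)"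
    by (simp only: cocycles_1)
  finally show ?thesis by (simp add: image_image)
qed

lemma bij_betw_HH0_class: "bij_betw HH0_class lps (HHco 0 :: (int list \<Rightarrow> int \<Rightarrow> 'r::comm_ring_1) set set)"
  by (auto simp: bij_betw_def inj_on_def HH0_class_eq HHco_0 cochain0_inj)

lemma bij_betw_HH1_class: "bij_betw HH1_class lps (HHco 1 :: (int list \<Rightarrow> int \<Rightarrow> 'r::comm_ring_1) set set)"
  unfolding bij_betw_def HHco_1 by (auto simp: inj_on_def HH1_class_eq der_cochain_inj)


section \<open>The cap product with a\<close>

lemma cap_a_rep: "cap (a_rep u k) q f v = - u * cap_word q f [1, k] v"
proof -
  have "cap (a_rep u k) q f v = (\<Sum>w\<in>{[1, k]}. a_rep u k w * cap_word q f w v)"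
    unfolding cap_def by (rule linext_eq_sum_superset) (auto simp: a_rep_def split: if_splits)
  then show ?thesis by (simp add: a_rep_def)
qed

lemma cap_a_rep_ge_2: "2 \<le> q \<Longrightarrow> cap (a_rep u k) q f = (\<lambda>v. 0)"
  by (rule ext) (simp add: cap_a_rep cap_word_def)

definition rho0 :: "'r::comm_ring_1 \<Rightarrow> int \<Rightarrow> (int \<Rightarrow> 'r) \<Rightarrow> int list \<Rightarrow> 'r" where
  "rho0 u k p = (\<lambda>v. \<Sum>i\<in>{i. p i \<noteq> 0}. (- u * p i) * bas [1, k + i] v)"

definition rho1 :: "'r::comm_ring_1 \<Rightarrow> int \<Rightarrow> (int \<Rightarrow> 'r) \<Rightarrow> int list \<Rightarrow> 'r" where
  "rho1 u k p = (\<lambda>v. \<Sum>i\<in>{i. p i \<noteq> 0}. (- u * p i) * bas [k + i] v)"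

lemma cap_a_rep_cochain0: "cap (a_rep u k) 0 (cochain0 p) = rho0 u k p"
  by (rule ext) (simp add: cap_a_rep cap_word_def cochain0_def rho0_def sum_distrib_left mult.assoc)

lemma cap_a_rep_der_cochain: "cap (a_rep u k) 1 (der_cochain p) = rho1 u k p"
proof
  fix v
  have "{i. - p i \<noteq> 0} = {i. p i \<noteq> 0}" by auto
  then show "cap (a_rep u k) 1 (der_cochain p) v = rho1 u k p v"
    by (simp add: cap_a_rep cap_word_def der_cochain_def rho1_def sum_distrib_left sum_negf mult.assoc)
qed

lemma rho0_apply:
  assumes p: "p \<in> lps"
  shows "rho0 u k p v = (if length v = 2 \<and> hd v = 1 then - u * p (v ! 1 - k) else 0)"
proof (cases "length v = 2 \<and> hd v = 1")
  case True
  then have v: "v = [1, v ! 1]" by (intro list_length_2_hd_1) simp_all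
  have "rho0 u k p v = (\<Sum>i\<in>{i. p i \<noteq> 0}. (- u * p i) * (if i = v ! 1 - k then 1 else 0))"
    unfolding rho0_def by (rule sum.cong) (auto simp: bas_apply normal_word_2, subst v, auto, subst (asm) v, auto)
  also have "\<dots> = - u * p (v ! 1 - k)"
    by (subst sum_mult_indicator) (use p in \<open>auto simp: lps_def\<close>)
  finally show ?thesis using True by simp
qed (auto simp: rho0_def bas_apply intro!: sum.neutral)

lemma rho1_apply:
  assumes p: "p \<in> lps"
  shows "rho1 u k p v = (if length v = 1 then - u * p (hd v - k) else 0)"
proof (cases "length v = 1")
  case True
  then obtain m where v: "v = [m]" by (auto simp: length_Suc_conv)
  have "rho1 u k p v = (\<Sum>i\<in>{i. p i \<noteq> 0}. (- u * p i) * (if i = m - k then 1 else 0))"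
    unfolding rho1_def by (rule sum.cong) (auto simp: bas_apply normal_word_1 v)
  also have "\<dots> = - u * p (m - k)"
    by (subst sum_mult_indicator) (use p in \<open>auto simp: lps_def\<close>)
  finally show ?thesis by (simp add: v)
qed (auto simp: rho1_def bas_apply intro!: sum.neutral)

lemma rho0_in_chainsN: "p \<in> lps \<Longrightarrow> rho0 u k p \<in> chainsN 1"
  unfolding rho0_def by (intro chainsN_sum ballI chainsN_scale bas_in_chainsN) (simp_all add: lps_def)

lemma rho0_in_chains: "p \<in> lps \<Longrightarrow> rho0 u k p \<in> chains 1"
  unfolding chains_1 by (rule rho0_in_chainsN)

lemma rho1_in_chainsN: "p \<in> lps \<Longrightarrow> rho1 u k p \<in> chainsN 0"
  unfolding rho1_def by (intro chainsN_sum ballI chainsN_scale bas_in_chainsN) (simp_all add: lps_def)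

lemma rhoHH_cochain0: "rhoHH u k 0 {cochain0 p} = hclass 1 (rho0 u k p)"
  by (simp add: rhoHH_def induced_def cap_a_rep_cochain0)

lemma rhoHH_der_cochain: "p \<in> lps \<Longrightarrow> rhoHH u k 1 {der_cochain p} = {rho1 u k p}"
  unfolding rhoHH_def induced_def singleton_iff some_eq_trivial cap_a_rep_der_cochain
  by (simp add: hclass_0 chains_0 rho1_in_chainsN)

section \<open>rho_a is bijective\<close>

text \<open>The coefficient of t^m dt in the Hochschild-Kostant-Rosenberg image t^a d(t^x) =
  x t^(x+a-1) dt of the 1-chain t^x \<otimes> t^a; the last argument is a dummy, so that the
  functional is linext (hkr_coeff m) c [].\<close>
definition hkr_coeff :: "int \<Rightarrow> int list \<Rightarrow> int list \<Rightarrow> 'r::comm_ring_1" where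
  "hkr_coeff m w v = (if w ! 0 + w ! 1 - 1 = m then of_int (w ! 0) else 0)"

lemma hkr_coeff_2: "(if normal_word [x, a] then hkr_coeff m [x, a] [] else 0)
    = (if x + a - 1 = m then of_int x else (0::'r::comm_ring_1))"
  by (cases "x = 0") (auto simp: normal_word_2 hkr_coeff_def)

lemma hkr_coeff_bd_word: "linext (hkr_coeff m) (bd_word [x, y, a]) [] = (0 :: 'r::comm_ring_1)"
proof -
  let ?W = "[[y, a + x], [x + y, a], [x, y + a]]" and ?c = "[1, -1, 1] :: 'r list"
  have sum3: "(\<Sum>j\<in>{0..<3::nat}. F j) = F 0 + F (Suc 0) + (F (Suc (Suc 0)) :: 'r)" for F
    by (simp add: eval_nat_numeral)
  have "bd_word [x, y, a] = (\<lambda>v. \<Sum>j\<in>{0..<3::nat}. ?c ! j * bas (?W ! j) v :: 'r)"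
    by (simp add: bd_word_3 sum3)
  then have "linext (hkr_coeff m) (bd_word [x, y, a]) [] = (\<Sum>j\<in>{0..<3::nat}. ?c ! j *
      (if normal_word (?W ! j) then hkr_coeff m (?W ! j) [] else (0::'r)))"
    by (simp only: linext_sum_bas[OF finite_atLeastLessThan])
  also have "\<dots> = (if y + (a + x) - 1 = m then of_int y else 0)
      - (if x + y + a - 1 = m then of_int (x + y) else 0) + (if x + (y + a) - 1 = m then of_int x else (0::'r))"
    unfolding sum3 by (simp only: nth_Cons_0 nth_Cons_Suc hkr_coeff_2) simp
  also have "\<dots> = 0"
    by (cases "x + y + a - 1 = m") (simp_all add: algebra_simps)
  finally show ?thesis .
qed

lemma hkr_coeff_boundary:
  assumes e: "e \<in> chainsN 2"
  shows "linext (hkr_coeff m) (linext bd_word e) [] = (0 :: 'r::comm_ring_1)"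
proof -
  have w: "\<exists>a b c. w = [a, b, c]" if "e w \<noteq> 0" for w
    using chainsN_length[OF e that] by (auto simp: numeral_2_eq_2 length_Suc_conv)
  have "finite {v. bd_word w v \<noteq> (0::'r)}" if ew: "e w \<noteq> 0" for w
  proof -
    obtain a b c where abc: "w = [a, b, c]" using w[OF ew] by auto
    have "{v. bd_word w v \<noteq> (0::'r)} \<subseteq> {[b, c + a], [a + b, c], [a, b + c]}"
    proof
      fix v assume "v \<in> {v. bd_word w v \<noteq> (0::'r)}"
      then have "bas [b, c + a] v - bas [a + b, c] v + bas [a, b + c] v \<noteq> (0::'r)"
        by (simp add: abc bd_word_3)
      then show "v \<in> {[b, c + a], [a + b, c], [a, b + c]}" by (auto simp: bas_apply split: if_splits)
    qed
    then show ?thesis by (rule finite_subset) simp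
  qed
  then have "linext (hkr_coeff m) (linext bd_word e) [] = linext (\<lambda>w. linext (hkr_coeff m) (bd_word w)) e []"
    by (rule linext_linext[OF chainsN_finite[OF e]])
  also have "\<dots> = (\<Sum>w\<in>{w. e w \<noteq> 0}. e w * linext (hkr_coeff m) (bd_word w) [])"
    by (simp only: linext_def[of "\<lambda>w. linext (hkr_coeff m) (bd_word w)" e])
  also have "\<dots> = 0"
  proof (rule sum.neutral, rule ballI)
    fix w assume "w \<in> {w. e w \<noteq> 0}"
    then obtain a b c where "w = [a, b, c]" using w[of w] by auto
    then show "e w * linext (hkr_coeff m) (bd_word w) [] = 0" by (simp add: hkr_coeff_bd_word)
  qed
  finally show ?thesis .
qed

lemma hkr_coeff_rho0:
  assumes p: "p \<in> lps"
  shows "linext (hkr_coeff m) (rho0 u k p) [] = - u * p (m - k)"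
proof -
  have fS: "finite {i. p i \<noteq> 0}" using p by (simp add: lps_def)
  have "linext (hkr_coeff m) (rho0 u k p) [] = (\<Sum>i\<in>{i. p i \<noteq> 0}. (- u * p i) *
      (if normal_word [1, k + i] then hkr_coeff m [1, k + i] [] else 0))"
    unfolding rho0_def by (rule linext_sum_bas[OF fS])
  also have "\<dots> = (\<Sum>i\<in>{i. p i \<noteq> 0}. (- u * p i) * (if i = m - k then 1 else 0))"
    by (rule sum.cong) (auto simp: normal_word_2 hkr_coeff_def)
  also have "\<dots> = - u * p (m - k)"
    by (subst sum_mult_indicator[OF fS]) auto
  finally show ?thesis .
qed

lemma rho0_class_inj:
  assumes u: "u dvd 1" and p: "p \<in> lps" and p': "p' \<in> lps"
    and e: "hclass 1 (rho0 u k p) = hclass 1 (rho0 u k p')"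
  shows "p = p'"
proof
  fix i
  have "(\<lambda>v. rho0 u k p v - rho0 u k p' v) \<in> boundaries 1"
    by (rule hclass_eqD[OF _ rho0_in_chainsN[OF p, folded chains_1] e]) simp
  then obtain e where e: "e \<in> chainsN 2" "(\<lambda>v. rho0 u k p v - rho0 u k p' v) = linext bd_word e"
    by (auto simp: boundaries_nonneg numeral_2_eq_2)
  have "0 = linext (hkr_coeff (i + k)) (\<lambda>v. rho0 u k p v - rho0 u k p' v) []"
    using hkr_coeff_boundary[OF e(1)] e(2) by simp
  also have "\<dots> = linext (hkr_coeff (i + k)) (rho0 u k p) [] - linext (hkr_coeff (i + k)) (rho0 u k p') []"
    by (rule linext_diff) (simp_all add: chainsN_finite[OF rho0_in_chainsN] p p')
  finally have "- u * p i = - u * p' i" using hkr_coeff_rho0[OF p] hkr_coeff_rho0[OF p'] by simp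
  then show "p i = p' i" by (rule unit_neg_mult_cancel[OF u])
qed

lemma chainsN_1_homologous:
  assumes c: "c \<in> chainsN 1"
  shows "(\<lambda>v. c v - (\<Sum>w\<in>{w. c w \<noteq> 0}. c w * (of_int (w ! 0) * bas [1, w ! 0 + w ! 1 - 1] v)))
    \<in> (boundaries 1 :: (int list \<Rightarrow> 'r::comm_ring_1) set)"
proof -
  let ?S = "{w. c w \<noteq> 0}"
  have c_eq: "c = (\<lambda>v. \<Sum>w\<in>?S. c w * bas [w ! 0, w ! 1] v)"
    by (subst chainsN_eq_sum_bas[OF c]) (metis (mono_tags, lifting) chainsN_1_word[OF c] mem_Collect_eq sum.cong)
  have "(\<lambda>v. \<Sum>w\<in>?S. c w * (bas [w ! 0, w ! 1] v - of_int (w ! 0) * bas [1, w ! 0 + w ! 1 - 1] v))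
      \<in> (boundaries 1 :: (int list \<Rightarrow> 'r) set)"
  proof (rule boundaries_sum)
    show "\<forall>w\<in>?S. (\<lambda>v. c w * (bas [w ! 0, w ! 1] v - of_int (w ! 0) * bas [1, w ! 0 + w ! 1 - 1] v))
        \<in> (boundaries 1 :: (int list \<Rightarrow> 'r) set)"
      by (intro ballI boundaries_scale[OF _ bas_2_homologous]) simp
  qed (simp_all add: chainsN_finite[OF c])
  moreover have "(\<lambda>v. c v - (\<Sum>w\<in>?S. c w * (of_int (w ! 0) * bas [1, w ! 0 + w ! 1 - 1] v)))
      = (\<lambda>v. \<Sum>w\<in>?S. c w * (bas [w ! 0, w ! 1] v - of_int (w ! 0) * bas [1, w ! 0 + w ! 1 - 1] v))"
    by (subst (1) c_eq) (simp add: right_diff_distrib sum_subtractf)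
  ultimately show ?thesis by simp
qed

lemma sum_dt_form_apply:
  "(\<Sum>w\<in>S. c w * (of_int (w ! 0) * bas [1, w ! 0 + w ! 1 - 1] v)) =
   (if length v = 2 \<and> hd v = 1 then (\<Sum>w\<in>S. c w * hkr_coeff (v ! 1) w []) else (0::'r::comm_ring_1))"
proof (cases "length v = 2 \<and> hd v = 1")
  case True
  then have v: "v = [1, v ! 1]" by (intro list_length_2_hd_1) simp_all
  have "bas [1, j] v = (if j = v ! 1 then 1 else (0::'r))" for j
    by (subst (1) v) (auto simp: bas_apply normal_word_2)
  then show ?thesis using True by (auto intro!: sum.cong simp: hkr_coeff_def)
next
  case False
  then have "bas [1, j] v = (0::'r)" for j by (auto simp: bas_apply)
  then show ?thesis using False by auto
qed

lemma rho0_class_surj: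
  assumes u: "u dvd 1" and c: "c \<in> chains 1"
  shows "\<exists>p\<in>lps. hclass 1 c = hclass 1 (rho0 u k p)"
proof -
  obtain u' where u': "1 = u * u'" using u by (auto simp: dvd_def)
  have cN: "c \<in> chainsN 1" using c by (simp only: chains_1)
  let ?S = "{w. c w \<noteq> 0}"
  define p where "p = (\<lambda>i. - u' * linext (hkr_coeff (k + i)) c [])"
  have "{i. p i \<noteq> 0} \<subseteq> (\<lambda>w. w ! 0 + w ! 1 - 1 - k) ` ?S"
  proof
    fix i assume "i \<in> {i. p i \<noteq> 0}"
    then have "(\<Sum>w\<in>?S. c w * hkr_coeff (k + i) w []) \<noteq> 0" by (auto simp: p_def linext_def)
    then obtain w where "w \<in> ?S" "c w * hkr_coeff (k + i) w [] \<noteq> 0"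
      by (meson sum.not_neutral_contains_not_neutral)
    then show "i \<in> (\<lambda>w. w ! 0 + w ! 1 - 1 - k) ` ?S"
      by (auto simp: hkr_coeff_def intro!: rev_image_eqI split: if_splits)
  qed
  then have p: "p \<in> lps"
    using chainsN_finite[OF cN] by (auto simp: lps_def intro: finite_subset)
  have "- u * p i = linext (hkr_coeff (k + i)) c []" for i
    using u' by (simp add: p_def) (metis mult.assoc mult_1)
  then have "(\<lambda>v. \<Sum>w\<in>?S. c w * (of_int (w ! 0) * bas [1, w ! 0 + w ! 1 - 1] v)) = rho0 u k p"
    unfolding sum_dt_form_apply rho0_apply[OF p] linext_def by (auto simp: fun_eq_iff)
  then have "hclass 1 c = hclass 1 (rho0 u k p)"
    using hclass_eqI[OF _ chainsN_1_homologous[OF cN]] by simp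
  then show ?thesis using p by blast
qed

lemma rho1_inj:
  assumes u: "u dvd 1" and p: "p \<in> lps" and p': "p' \<in> lps" and e: "rho1 u k p = rho1 u k p'"
  shows "p = p'"
proof
  fix i
  have "- u * p i = - u * p' i"
    using fun_cong[OF e, of "[i + k]"] rho1_apply[OF p] rho1_apply[OF p'] by simp
  then show "p i = p' i" by (rule unit_neg_mult_cancel[OF u])
qed

lemma rho1_surj:
  assumes u: "u dvd 1" and c: "c \<in> chains 0"
  shows "\<exists>p\<in>lps. c = rho1 u k p"
proof -
  obtain u' where u': "1 = u * u'" using u by (auto simp: dvd_def)
  have cN: "c \<in> chainsN 0" using c by (simp only: chains_0)
  define p where "p = (\<lambda>i. - u' * c [k + i])"
  have "{i. p i \<noteq> 0} \<subseteq> (\<lambda>w. hd w - k) ` {w. c w \<noteq> 0}"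
  proof
    fix i assume "i \<in> {i. p i \<noteq> 0}"
    then have "c [k + i] \<noteq> 0" by (auto simp: p_def)
    then show "i \<in> (\<lambda>w. hd w - k) ` {w. c w \<noteq> 0}" by (auto intro: rev_image_eqI)
  qed
  then have p: "p \<in> lps" using chainsN_finite[OF cN] by (auto simp: lps_def intro: finite_subset)
  have "c v = rho1 u k p v" for v
  proof (cases "length v = 1")
    case True
    then obtain m where v: "v = [m]" by (auto simp: length_Suc_conv)
    have "rho1 u k p v = - u * p (m - k)" using rho1_apply[OF p] v by simp
    then show ?thesis using u' by (simp add: v p_def) (metis mult.assoc mult_1)
  qed (use chainsN_length[OF cN] rho1_apply[OF p] in force)
  then show ?thesis using p by blast
qed

lemma bij_rhoHH_0:
  assumes u: "u dvd 1"
  shows "bij_betw (rhoHH u k 0) (HHco 0) (HHho 1 :: (int list \<Rightarrow> 'r::comm_ring_1) set set)"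
proof -
  have "inj_on (rhoHH u k 0) (HHco 0 :: (int list \<Rightarrow> int \<Rightarrow> 'r) set set)"
    unfolding HHco_0 using rho0_class_inj[OF u] by (auto simp: inj_on_def rhoHH_cochain0)
  moreover have "rhoHH u k 0 ` HHco 0 = (HHho 1 :: (int list \<Rightarrow> 'r) set set)"
  proof
    show "rhoHH u k 0 ` HHco 0 \<subseteq> HHho 1"
      unfolding HHco_0 HHho_def cycles_1 by (auto simp: rhoHH_cochain0 intro: rho0_in_chains)
    show "HHho 1 \<subseteq> rhoHH u k 0 ` HHco 0"
    proof
      fix Z assume "Z \<in> (HHho 1 :: (int list \<Rightarrow> 'r) set set)"
      then obtain c where c: "c \<in> chains 1" "Z = hclass 1 c" by (auto simp: HHho_def cycles_1)
      then obtain p where "p \<in> lps" "Z = rhoHH u k 0 {cochain0 p}"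
        using rho0_class_surj[OF u c(1)] by (auto simp: rhoHH_cochain0)
      then show "Z \<in> rhoHH u k 0 ` HHco 0" unfolding HHco_0 by blast
    qed
  qed
  ultimately show ?thesis by (simp add: bij_betw_def)
qed

lemma bij_rhoHH_1:
  assumes u: "u dvd 1"
  shows "bij_betw (rhoHH u k 1) (HHco 1) (HHho 0 :: (int list \<Rightarrow> 'r::comm_ring_1) set set)"
proof -
  have "inj_on (rhoHH u k 1) (HHco 1 :: (int list \<Rightarrow> int \<Rightarrow> 'r) set set)"
  proof (rule inj_onI)
    fix X Y :: "(int list \<Rightarrow> int \<Rightarrow> 'r) set"
    assume "X \<in> HHco 1" "Y \<in> HHco 1" and e: "rhoHH u k 1 X = rhoHH u k 1 Y"
    then obtain p p' where p: "p \<in> lps" "X = {der_cochain p}" and p': "p' \<in> lps" "Y = {der_cochain p'}"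
      unfolding HHco_1 by auto
    have "rho1 u k p = rho1 u k p'"
      using e unfolding p(2) p'(2) rhoHH_der_cochain[OF p(1)] rhoHH_der_cochain[OF p'(1)] by simp
    then have "p = p'" by (rule rho1_inj[OF u p(1) p'(1)])
    then show "X = Y" using p(2) p'(2) by simp
  qed
  moreover have "rhoHH u k 1 ` HHco 1 = (HHho 0 :: (int list \<Rightarrow> 'r) set set)"
  proof
    show "rhoHH u k 1 ` HHco 1 \<subseteq> HHho 0"
      unfolding HHco_1 HHho_0 chains_0 using rhoHH_der_cochain rho1_in_chainsN by fastforce
    show "HHho 0 \<subseteq> rhoHH u k 1 ` HHco 1"
    proof
      fix Z assume "Z \<in> (HHho 0 :: (int list \<Rightarrow> 'r) set set)"
      then obtain c where c: "c \<in> chains 0" "Z = {c}" by (auto simp: HHho_0)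
      then obtain p where "p \<in> lps" "Z = rhoHH u k 1 {der_cochain p}"
        using rho1_surj[OF u c(1)] rhoHH_der_cochain by metis
      then show "Z \<in> rhoHH u k 1 ` HHco 1" unfolding HHco_1 by blast
    qed
  qed
  ultimately show ?thesis by (simp add: bij_betw_def)
qed

lemma bij_rhoHH_ge_2:
  assumes q: "2 \<le> q"
  shows "bij_betw (rhoHH u k q) (HHco q) (HHho (1 - int q) :: (int list \<Rightarrow> 'r::comm_ring_1) set set)"
proof -
  have "rhoHH u k q (coclass q (\<lambda>as i. 0 :: 'r)) = {\<lambda>v. 0}"
    using q by (simp add: rhoHH_def induced_def cap_a_rep_ge_2 hclass_neg)
  then show ?thesis using q by (simp add: HHco_ge_2 HHho_neg bij_betw_def)
qed

lemma bij_rhoHH: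
  assumes u: "u dvd 1"
  shows "bij_betw (rhoHH u k q) (HHco q) (HHho (1 - int q) :: (int list \<Rightarrow> 'r::comm_ring_1) set set)"
proof -
  consider "q = 0" | "q = 1" | "2 \<le> q" by linarith
  then show ?thesis
    using bij_rhoHH_0[OF u] bij_rhoHH_1[OF u] bij_rhoHH_ge_2 by cases simp_all
qed


section \<open>The algebra structure of HH^*\<close>

lemma cochain0_add: "cochain0 (\<lambda>i. p i + p' i) = (\<lambda>as i. cochain0 p as i + cochain0 p' as i)"
  by (auto simp: cochain0_def fun_eq_iff)

lemma der_cochain_add: "der_cochain (\<lambda>i. p i + p' i) = (\<lambda>as i. der_cochain p as i + der_cochain p' as i)"
  by (auto simp: der_cochain_def fun_eq_iff algebra_simps)

lemma cochain0_lsmult: "cochain0 (lsmult r p) = (\<lambda>as i. r * cochain0 p as i)"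
  by (auto simp: cochain0_def lsmult_def fun_eq_iff)

lemma der_cochain_lsmult: "der_cochain (lsmult r p) = (\<lambda>as i. r * der_cochain p as i)"
  by (auto simp: der_cochain_def lsmult_def fun_eq_iff algebra_simps)

lemma cup_cochain0_cochain0: "cup 0 0 (cochain0 p) (cochain0 p') = cochain0 (lmul p p')"
  by (auto simp: cup_def cochain0_def fun_eq_iff)

lemma cup_cochain0_der_cochain: "cup 0 1 (cochain0 p) (der_cochain p') = der_cochain (lmul p p')"
proof (intro ext)
  fix as i
  show "cup 0 1 (cochain0 p) (der_cochain p') as i = der_cochain (lmul p p') as i"
  proof (cases "length as = 1 \<and> hd as \<noteq> 0")
    case True
    then obtain a where as: "as = [a]" "a \<noteq> 0" by (cases as) auto
    have "cup 0 1 (cochain0 p) (der_cochain p') as i = lmul p (der_cochain p' [a]) i"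
      by (simp add: as cup_def cochain0_def)
    also have "\<dots> = - of_int a * lmul p p' (i - (a - 1))"
      unfolding der_cochain_single[OF as(2)] lmul_scaled_shift_right ..
    finally show ?thesis by (simp add: as der_cochain_single)
  qed (auto simp: cup_def cochain0_def der_cochain_def lmul_zero_right)
qed

lemma cup_der_cochain_cochain0:
  assumes p: "p \<in> lps" and p': "p' \<in> lps"
  shows "cup 1 0 (der_cochain p') (cochain0 p) = der_cochain (lmul p p')"
proof (intro ext)
  fix as i
  show "cup 1 0 (der_cochain p') (cochain0 p) as i = der_cochain (lmul p p') as i"
  proof (cases "length as = 1 \<and> hd as \<noteq> 0")
    case True
    then obtain a where as: "as = [a]" "a \<noteq> 0" by (cases as) auto
    have "cup 1 0 (der_cochain p') (cochain0 p) as i = lmul (der_cochain p' [a]) p i"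
      by (simp add: as cup_def cochain0_def)
    also have "\<dots> = - of_int a * lmul p' p (i - (a - 1))"
      unfolding der_cochain_single[OF as(2)] lmul_scaled_shift_left[OF p'] ..
    finally show ?thesis by (simp add: as der_cochain_single lmul_commute[OF p p'])
  qed (auto simp: cup_def cochain0_def der_cochain_def lmul_zero_left)
qed

lemma triangular_add:
  "(a + b) * (a + b - 1) div 2 = a * (a - 1) div 2 + b * (b - 1) div 2 + a * (b::int)"
proof -
  have "even (x * (x - 1))" for x :: int by (cases "even x") auto
  then obtain A B where "a * (a - 1) = 2 * A" "b * (b - 1) = 2 * B" by (meson evenE)
  moreover have "(a + b) * (a + b - 1) = a * (a - 1) + b * (b - 1) + 2 * (a * b)"
    by (simp add: algebra_simps)
  ultimately show ?thesis by simp
qed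

text \<open>y \<union> y' = \<delta> h for the 1-cochain h(t^a) = -binom(a,2) t^(a-2) p p', since
  binom(a+b,2) - binom(a,2) - binom(b,2) = a b.\<close>
definition cup_der_cochain_primitive :: "(int \<Rightarrow> 'r::comm_ring_1) \<Rightarrow> int list \<Rightarrow> int \<Rightarrow> 'r" where
  "cup_der_cochain_primitive P = (\<lambda>as. if length as = 1 \<and> hd as \<noteq> 0
     then (\<lambda>i. - of_int (hd as * (hd as - 1) div 2) * P (i - (hd as - 2))) else (\<lambda>i. 0))"

lemma cup_der_cochain_primitive_in_cochains:
  assumes P: "P \<in> lps"
  shows "cup_der_cochain_primitive P \<in> cochains 1"
  unfolding cochains_def
proof (intro CollectI conjI allI impI)
  fix as
  show "cup_der_cochain_primitive P as \<in> lps"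
    using lps_scaled_shift[OF P, of "- of_int (hd as * (hd as - 1) div 2)" "hd as - 2"]
    by (simp add: cup_der_cochain_primitive_def)
next
  fix as assume "cup_der_cochain_primitive P as \<noteq> (\<lambda>i. 0)"
  then have "length as = 1" "hd as \<noteq> 0" by (auto simp: cup_der_cochain_primitive_def split: if_splits)
  then show "length as = 1" "\<forall>a\<in>set as. a \<noteq> 0" by (cases as; simp)+
qed

lemma cobd_cup_der_cochain_primitive:
  fixes p p' :: "int \<Rightarrow> 'r::comm_ring_1"
  assumes p: "p \<in> lps" and p': "p' \<in> lps"
  shows "cobd 1 (cup_der_cochain_primitive (lmul p p')) = cup 1 1 (der_cochain p) (der_cochain p')"
proof (intro ext)
  fix as i
  let ?h = "cup_der_cochain_primitive (lmul p p')"
  have h: "?h [a] i = - of_int (a * (a - 1) div 2) * lmul p p' (i - (a - 2))" for a i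
    by (cases "a = 0") (simp_all add: cup_der_cochain_primitive_def)
  show "cobd 1 ?h as i = cup 1 1 (der_cochain p) (der_cochain p') as i"
  proof (cases "length as = 2 \<and> (\<forall>a\<in>set as. a \<noteq> 0)")
    case True
    then obtain a b where ab: "as = [a, b]" "a \<noteq> 0" "b \<noteq> 0"
      by (auto simp: numeral_2_eq_2 length_Suc_conv)
    have tri: "of_int ((a + b) * (a + b - 1) div 2)
        = of_int (a * (a - 1) div 2) + of_int (b * (b - 1) div 2) + (of_int (a * b) :: 'r)"
      by (simp add: triangular_add)
    have "cobd 1 ?h as i = ?h [b] (i - a) - ?h [a + b] i + ?h [a] (i - b)"
      unfolding ab(1) by (rule cobd_2[OF ab(2,3)])
    also have "\<dots> = of_int (a * b) * lmul p p' (i - (a + b - 2))"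
      unfolding h tri by (simp add: algebra_simps)
    also have "\<dots> = lmul (der_cochain p [a]) (der_cochain p' [b]) i"
      unfolding der_cochain_single[OF ab(2)] der_cochain_single[OF ab(3)]
        lmul_scaled_shift_left[OF p] lmul_scaled_shift_right by (simp add: algebra_simps)
    finally show ?thesis using ab by (simp add: cup_def)
  next
    case False
    have "cup 1 1 (der_cochain p) (der_cochain p') as i = 0"
    proof (cases "length as = 2")
      case True
      then obtain a b where ab: "as = [a, b]" by (auto simp: numeral_2_eq_2 length_Suc_conv)
      then have "a = 0 \<or> b = 0" using False True by auto
      then show ?thesis using ab by (auto simp: cup_def der_cochain_def lmul_zero_left lmul_zero_right)
    qed (simp add: cup_def)
    then show ?thesis using False by (auto simp: cobd_apply numeral_2_eq_2)
  qed
qed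

lemma coclass_cup_der_cochain:
  assumes p: "p \<in> lps" and p': "p' \<in> lps"
  shows "coclass 2 (cup 1 1 (der_cochain p) (der_cochain p')) = coclass 2 (\<lambda>as i. 0 :: 'r::comm_ring_1)"
proof (rule coclass_eqI)
  show "(\<lambda>as i. cup 1 1 (der_cochain p) (der_cochain p') as i - 0) \<in> coboundaries 2"
    using cobd_cup_der_cochain_primitive[OF p p'] cup_der_cochain_primitive_in_cochains[OF lps_lmul[OF p p']]
    by (force simp: coboundaries_def)
qed simp

lemma addHH_HH0_class:
  assumes "p \<in> lps" "p' \<in> lps"
  shows "addHH 0 (HH0_class p) (HH0_class p') = HH0_class (\<lambda>i. p i + p' i)"
  unfolding HH0_class_eq[OF assms(1)] HH0_class_eq[OF assms(2)] addHH_def singleton_iff some_eq_trivial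
  unfolding HH0_class_def cochain0_add ..

lemma addHH_HH1_class:
  assumes "p \<in> lps" "p' \<in> lps"
  shows "addHH 1 (HH1_class p) (HH1_class p') = HH1_class (\<lambda>i. p i + p' i)"
  unfolding HH1_class_eq[OF assms(1)] HH1_class_eq[OF assms(2)] addHH_def singleton_iff some_eq_trivial
  unfolding HH1_class_def der_cochain_add ..

lemma smultHH_HH0_class:
  assumes "p \<in> lps"
  shows "smultHH 0 r (HH0_class p) = HH0_class (lsmult r p)"
  unfolding HH0_class_eq[OF assms] smultHH_def singleton_iff some_eq_trivial
  unfolding HH0_class_def cochain0_lsmult ..

lemma smultHH_HH1_class:
  assumes "p \<in> lps"
  shows "smultHH 1 r (HH1_class p) = HH1_class (lsmult r p)"
  unfolding HH1_class_eq[OF assms] smultHH_def singleton_iff some_eq_trivial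
  unfolding HH1_class_def der_cochain_lsmult ..

lemma cupHH_HH0_class:
  assumes "p \<in> lps" "p' \<in> lps"
  shows "cupHH 0 0 (HH0_class p) (HH0_class p') = HH0_class (lmul p p')"
  unfolding HH0_class_eq[OF assms(1)] HH0_class_eq[OF assms(2)] cupHH_def singleton_iff some_eq_trivial
  unfolding HH0_class_def cup_cochain0_cochain0 add_0 ..

lemma cupHH_HH0_class_HH1_class:
  assumes "p \<in> lps" "p' \<in> lps"
  shows "cupHH 0 1 (HH0_class p) (HH1_class p') = HH1_class (lmul p p')"
  unfolding HH0_class_eq[OF assms(1)] HH1_class_eq[OF assms(2)] cupHH_def singleton_iff some_eq_trivial
  unfolding HH1_class_def cup_cochain0_der_cochain add_0 ..

lemma cupHH_HH1_class_HH0_class: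
  assumes "p \<in> lps" "p' \<in> lps"
  shows "cupHH 1 0 (HH1_class p') (HH0_class p) = HH1_class (lmul p p')"
  unfolding HH0_class_eq[OF assms(1)] HH1_class_eq[OF assms(2)] cupHH_def singleton_iff some_eq_trivial
  unfolding HH1_class_def cup_der_cochain_cochain0[OF assms] add_0_right ..

lemma cupHH_HH1_class:
  assumes "p \<in> lps" "p' \<in> lps"
  shows "cupHH 1 1 (HH1_class p) (HH1_class p') = coclass 2 (\<lambda>as i. 0)"
  unfolding HH1_class_eq[OF assms(1)] HH1_class_eq[OF assms(2)] cupHH_def singleton_iff some_eq_trivial
    one_add_one by (rule coclass_cup_der_cochain[OF assms])

section \<open>Connes' operator and Delta_a\<close>

lemma BHH_rhoHH_HH0_class:
  assumes p: "p \<in> lps"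
  shows "BHH 1 (rhoHH u k 0 (HH0_class p)) = hclass 2 (\<lambda>v. 0 :: 'r::comm_ring_1)"
proof -
  let ?X = "hclass 1 (rho0 u k p) :: (int list \<Rightarrow> 'r) set"
  have "rho0 u k p \<in> ?X"
    using rho0_in_chainsN[OF p] zero_in_boundaries[of 1] by (simp add: hclass_def chains_1)
  then have "(SOME x. x \<in> ?X) \<in> ?X" by (rule someI[where P = "\<lambda>x. x \<in> ?X"])
  then have x: "(SOME x. x \<in> ?X) \<in> chains 1" by (simp add: hclass_def)
  have "BHH 1 ?X = hclass 2 (connesB 1 (SOME x. x \<in> ?X))"
    by (simp add: BHH_def induced_def)
  also have "\<dots> = hclass 2 (\<lambda>v. 0)"
    by (rule hclass_eqI) (use connesB_1_in_boundaries[OF x] in simp_all)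
  finally show ?thesis by (simp add: HH0_class_eq[OF p] rhoHH_cochain0)
qed

lemma connesB_rho1_tpow: "connesB 0 (rho1 u k (tpow i)) = (\<lambda>v. - u * bas [k + i, 0] v :: 'r::comm_ring_1)"
proof
  fix v
  let ?S = "{j. tpow i j \<noteq> (0::'r)}"
  have "connesB 0 (rho1 u k (tpow i)) v = linext connesB_word (rho1 u k (tpow i)) v"
    by (simp add: connesB_def)
  also have "\<dots> = (\<Sum>j\<in>?S. (- u * tpow i j) * (if normal_word [k + j] then connesB_word [k + j] v else 0))"
    unfolding rho1_def by (rule linext_sum_bas) (simp add: tpow_def)
  also have "\<dots> = (\<Sum>j\<in>{i}. (- u * tpow i j) * bas [k + j, 0] v)"
    by (rule sum.cong) (auto simp: tpow_def normal_word_1 connesB_word_1)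
  finally show "connesB 0 (rho1 u k (tpow i)) v = - u * bas [k + i, 0] v"
    by (simp add: tpow_def)
qed

lemma rho0_lsmult_tpow: "rho0 u k (lsmult c (tpow j)) v = - u * (c * bas [1, k + j] v :: 'r::comm_ring_1)"
proof -
  have rho0: "rho0 u k (lsmult c (tpow j)) v
      = (if length v = 2 \<and> hd v = 1 then - u * (c * tpow j (v ! 1 - k)) else 0)"
    using rho0_apply[OF lps_lsmult[OF lps_tpow], of u k c j v] by (simp add: lsmult_def)
  show ?thesis
  proof (cases "length v = 2 \<and> hd v = 1")
    case True
    then have v: "v = [1, v ! 1]" by (intro list_length_2_hd_1) simp_all
    have "bas [1, k + j] v = (if v ! 1 = k + j then 1 else (0::'r))"
      by (subst (1) v) (auto simp: bas_apply normal_word_2)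
    then show ?thesis using True rho0 by (auto simp: tpow_def)
  qed (use rho0 in \<open>auto simp: bas_apply\<close>)
qed

lemma DeltaHH_HH1_class_tpow:
  fixes u :: "'r::comm_ring_1"
  assumes u: "u dvd 1"
  shows "DeltaHH u k 1 (HH1_class (tpow i)) = HH0_class (lsmult (of_int (i + k)) (tpow (i - 1)) :: int \<Rightarrow> 'r)"
proof -
  let ?q = "lsmult (of_int (i + k)) (tpow (i - 1)) :: int \<Rightarrow> 'r"
  have q: "?q \<in> lps" by (rule lps_lsmult[OF lps_tpow])
  have "BHH 0 (rhoHH u k 1 (HH1_class (tpow i))) = hclass 1 (\<lambda>v. - u * bas [k + i, 0] v)"
    unfolding HH1_class_eq[OF lps_tpow] rhoHH_der_cochain[OF lps_tpow]
    by (simp add: BHH_def induced_def connesB_rho1_tpow)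
  also have "\<dots> = hclass 1 (rho0 u k ?q)"
    using boundaries_scale[OF _ bas_2_homologous[of "k + i" 0], of "- u"]
    by (intro hclass_eqI) (simp_all add: rho0_lsmult_tpow algebra_simps)
  also have "\<dots> = rhoHH u k 0 (HH0_class ?q)"
    by (simp only: HH0_class_eq[OF q] rhoHH_cochain0)
  finally have "BHH 0 (rhoHH u k 1 (HH1_class (tpow i))) = rhoHH u k 0 (HH0_class ?q)" .
  moreover have "HH0_class ?q \<in> HHco 0"
    using bij_betw_HH0_class q by (auto simp: bij_betw_def)
  ultimately show ?thesis
    using bij_rhoHH_0[OF u] by (simp add: DeltaHH_def bij_betw_def the_inv_into_f_f)
qed

theorem mainTheorem14:
  fixes u :: "'r::comm_ring_1" and k :: int
  assumes unit: "u dvd 1"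
  shows
    "(\<forall>q. bij_betw (rhoHH u k q) (HHco q) (HHho (1 - int q))) \<and>
     (\<exists>\<Phi>0 \<Phi>1 :: (int \<Rightarrow> 'r) \<Rightarrow> (int list \<Rightarrow> int \<Rightarrow> 'r) set.
        bij_betw \<Phi>0 lps (HHco 0) \<and> bij_betw \<Phi>1 lps (HHco 1) \<and>
        (\<forall>p\<in>lps. \<forall>p'\<in>lps.
            \<Phi>0 (\<lambda>i. p i + p' i) = addHH 0 (\<Phi>0 p) (\<Phi>0 p') \<and>
            \<Phi>1 (\<lambda>i. p i + p' i) = addHH 1 (\<Phi>1 p) (\<Phi>1 p')) \<and>
        (\<forall>r. \<forall>p\<in>lps. \<Phi>0 (lsmult r p) = smultHH 0 r (\<Phi>0 p) \<and>
                      \<Phi>1 (lsmult r p) = smultHH 1 r (\<Phi>1 p)) \<and>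
        (\<forall>p\<in>lps. \<forall>p'\<in>lps.
            \<Phi>0 (lmul p p') = cupHH 0 0 (\<Phi>0 p) (\<Phi>0 p') \<and>
            \<Phi>1 (lmul p p') = cupHH 0 1 (\<Phi>0 p) (\<Phi>1 p') \<and>
            \<Phi>1 (lmul p p') = cupHH 1 0 (\<Phi>1 p') (\<Phi>0 p) \<and>
            cupHH 1 1 (\<Phi>1 p) (\<Phi>1 p') = coclass 2 (\<lambda>as i. 0)) \<and>
        \<Phi>0 (tpow 1) = coclass 0 (cochain0 (tpow 1)) \<and>
        \<Phi>0 (tpow (-1)) = coclass 0 (cochain0 (tpow (-1))) \<and>
        \<Phi>1 (tpow 0) = coclass 1 yder \<and>
        (\<forall>i. BHH 1 (rhoHH u k 0 (\<Phi>0 (tpow i))) = hclass 2 (\<lambda>v. 0)) \<and>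
        (\<forall>i. DeltaHH u k 1 (\<Phi>1 (tpow i)) = \<Phi>0 (lsmult (of_int (i + k)) (tpow (i - 1)))))"
proof -
  have generators: "HH0_class (tpow 1) = coclass 0 (cochain0 (tpow 1 :: int \<Rightarrow> 'r))"
    "HH0_class (tpow (-1)) = coclass 0 (cochain0 (tpow (-1) :: int \<Rightarrow> 'r))"
    "HH1_class (tpow 0) = coclass 1 (yder :: int list \<Rightarrow> int \<Rightarrow> 'r)"
    by (simp_all add: HH0_class_def HH1_class_def der_cochain_tpow_0)
  show ?thesis
    by (intro conjI allI; (rule exI[of _ HH0_class], rule exI[of _ HH1_class])?; (intro conjI allI ballI)?)
      (simp_all del: One_nat_def add: bij_rhoHH[OF unit] bij_betw_HH0_class bij_betw_HH1_class generators
        addHH_HH0_class addHH_HH1_class smultHH_HH0_class smultHH_HH1_class cupHH_HH0_class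
        cupHH_HH0_class_HH1_class cupHH_HH1_class_HH0_class cupHH_HH1_class BHH_rhoHH_HH0_class
        DeltaHH_HH1_class_tpow[OF unit])
qed

end
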